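(* The linear map $\phi':\mathcal{H}_{WPP}\to\mathbf{WQSym}$ defined by $\phi'(P)=\sum_{g\in WLin(P)} g$ is a Hopf algebra isomorphism from $\mathcal{H}_{WPP}$ onto $(\mathbf{WQSym},.,\Delta)$; moreover $\phi'=\psi\circ\phi$, where $\phi(P)=\sum_{f\in Lin(P)}f$ and $\psi(f)=\sum_{g\prec f} g$.
   Context: A double poset is a finite set with two partial orders $\leq_1,\leq_2$. A weak plane poset is a double poset such that $x\leq_1 y$ and $x\leq_2 y$ imply $x=y$, and $x\preceq y\iff(x\leq_1 y$ or $x\leq_2 y)$ is a total quasi-order; $x\equiv y$ means $x\preceq y$ and $y\preceq x$; $x\ll y\iff(y\leq_1 x$ or $x\leq_2 y)$ is a total order, and $P$ is identified with $[n]$ so that $\ll$ is the natural order. $\mathcal{H}_{WPP}$ is the span of isomorphism classes of weak plane posets, with product $PQ$ on $P\sqcup Q$ ($\leq_1$ the disjoint union; $i\leq_2 j$ iff $i,j$ in the same factor and $i\leq_2 j$ there, or $i\in P,j\in Q$), unit the empty poset, and coproduct $\Delta(P)=\sum_O P_{|P\setminus O}\otimes P_{|O}$ over subsets $O$ upward closed for $\leq_1$. $Lin(P)$: surjections $f:[n]\to[k]$ with $i\leq_1 j\Rightarrow f(i)\leq f(j)$ and $f(i)=f(j)\Rightarrow i\equiv j$. $WLin(P)$: surjections $f:[n]\to[k]$ with $i\leq_1 j\Rightarrow f(i)\leq f(j)$ and ($i\leq_1 j$ and $f(i)=f(j)$) $\Rightarrow i\equiv j$. Surjections are identified with packed words $f(1)\cdots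 f(n)$ (words whose letters form $\{1,\dots,k\}$), which form a basis of $\mathbf{WQSym}$. For packed words $f,g$ of length $n$, $g\prec f$ means: $f(i)\leq f(j)\Rightarrow g(i)\leq g(j)$, and ($i<j$, $f(i)>f(j)$) $\Rightarrow g(i)>g(j)$. $pack$ replaces the letters of a word by their ranks. The product $.$ is $u.v=\sum w$ over packed words $w$ of length $|u|+|v|$ with $pack(w_1\cdots w_{|u|})=u$ and $pack(w_{|u|+1}\cdots)=v$ (e.g. $(1).(1)=(12)+(21)+(11)$). The coproduct is $\Delta(w)=\sum_{k=0}^{\max w} w_{|\leq k}\otimes pack(w_{|>k})$, with $w_{|\leq k}$, $w_{|>k}$ the subwords of letters $\leq k$, $>k$. *)

theory Defs
  imports Main
begin

definition supp :: "('b \<Rightarrow> 'k::zero) \<Rightarrow> 'b set" where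
  "supp a = {x. a x \<noteq> 0}"

definition freevec :: "'b set \<Rightarrow> ('b \<Rightarrow> 'k::zero) set" where
  "freevec B = {a. finite (supp a) \<and> supp a \<subseteq> B}"

text \<open>Linear extension of a map given on basis elements by its matrix M x y
  (coefficient of basis element y in the image of basis element x).\<close>
definition lin_ext :: "('b \<Rightarrow> 'c \<Rightarrow> 'k::comm_semiring_1) \<Rightarrow> ('b \<Rightarrow> 'k) \<Rightarrow> ('c \<Rightarrow> 'k)" where
  "lin_ext M a = (\<lambda>y. \<Sum>x\<in>supp a. a x * M x y)"

definition bilin_ext :: "('b \<Rightarrow> 'b \<Rightarrow> 'c \<Rightarrow> 'k::comm_semiring_1) \<Rightarrow> ('b \<Rightarrow> 'k) \<Rightarrow> ('b \<Rightarrow> 'k) \<Rightarrow> ('c \<Rightarrow> 'k)" where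
  "bilin_ext M a b = (\<lambda>z. \<Sum>x\<in>supp a. \<Sum>y\<in>supp b. a x * b y * M x y z)"

text \<open>Tensor product f \<otimes> g of two matrix-given maps, acting on the tensor square
  (represented as finitely supported functions on pairs of basis elements).\<close>
definition tensor_mat :: "('b \<Rightarrow> 'c \<Rightarrow> 'k::comm_semiring_1) \<Rightarrow> ('b \<Rightarrow> 'c \<Rightarrow> 'k)
     \<Rightarrow> ('b \<times> 'b) \<Rightarrow> ('c \<times> 'c) \<Rightarrow> 'k" where
  "tensor_mat M N = (\<lambda>(x1, x2) (y1, y2). M x1 y1 * N x2 y2)"

definition ind :: "bool \<Rightarrow> 'k::zero_neq_one" where
  "ind b = (if b then 1 else 0)"

text \<open>A weak plane poset on [n] = {1..n}, labelled so that \<ll> is the natural order;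
  this is a canonical representative of its isomorphism class.
  Data: (n, \<le>1, \<le>2) with the orders given as relations.\<close>
type_synonym wppdata = "nat \<times> (nat \<times> nat) set \<times> (nat \<times> nat) set"

definition partial_order_on_set :: "nat set \<Rightarrow> (nat \<times> nat) set \<Rightarrow> bool" where
  "partial_order_on_set A R \<longleftrightarrow> R \<subseteq> A \<times> A \<and> (\<forall>x\<in>A. (x, x) \<in> R) \<and> antisym R \<and> trans R"

definition is_wpp :: "wppdata \<Rightarrow> bool" where
  "is_wpp P = (case P of (n, R1, R2) \<Rightarrow>
      partial_order_on_set {1..n} R1 \<and> partial_order_on_set {1..n} R2
    \<and> (\<forall>x y. (x, y) \<in> R1 \<and> (x, y) \<in> R2 \<longrightarrow> x = y)
    \<comment> \<open>\<preceq> is a total quasi-order\<close>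
    \<and> trans (R1 \<union> R2)
    \<and> (\<forall>x\<in>{1..n}. \<forall>y\<in>{1..n}. (x, y) \<in> R1 \<union> R2 \<or> (y, x) \<in> R1 \<union> R2)
    \<comment> \<open>\<ll> is a total order and equals the natural order on [n]\<close>
    \<and> (\<forall>x\<in>{1..n}. \<forall>y\<in>{1..n}. x \<le> y \<longleftrightarrow> ((y, x) \<in> R1 \<or> (x, y) \<in> R2)))"

definition WPP :: "wppdata set" where
  "WPP = {P. is_wpp P}"

definition shift_rel :: "nat \<Rightarrow> (nat \<times> nat) set \<Rightarrow> (nat \<times> nat) set" where
  "shift_rel k R = {(i + k, j + k) | i j. (i, j) \<in> R}"

definition wpp_prod :: "wppdata \<Rightarrow> wppdata \<Rightarrow> wppdata" where
  "wpp_prod P Q = (case P of (n, R1, R2) \<Rightarrow> case Q of (m, S1, S2) \<Rightarrow>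
     (n + m, R1 \<union> shift_rel n S1,
      R2 \<union> shift_rel n S2 \<union> {(i, j). i \<in> {1..n} \<and> j \<in> {n+1..n+m}}))"

definition empty_wpp :: wppdata where
  "empty_wpp = (0, {}, {})"

text \<open>Rank of i in a finite set S (order-preserving relabelling of S onto [card S]).\<close>
definition rk :: "nat set \<Rightarrow> nat \<Rightarrow> nat" where
  "rk S i = card {y \<in> S. y \<le> i}"

definition restr :: "wppdata \<Rightarrow> nat set \<Rightarrow> wppdata" where
  "restr P S = (case P of (n, R1, R2) \<Rightarrow>
     (card S, {(rk S i, rk S j) | i j. (i, j) \<in> R1 \<and> i \<in> S \<and> j \<in> S},
              {(rk S i, rk S j) | i j. (i, j) \<in> R2 \<and> i \<in> S \<and> j \<in> S}))"

definition upclosed1 :: "wppdata \<Rightarrow> nat set \<Rightarrow> bool" where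
  "upclosed1 P U = (case P of (n, R1, R2) \<Rightarrow>
     U \<subseteq> {1..n} \<and> (\<forall>i j. (i, j) \<in> R1 \<and> i \<in> U \<longrightarrow> j \<in> U))"

definition prodH :: "(wppdata \<Rightarrow> 'k::field) \<Rightarrow> (wppdata \<Rightarrow> 'k) \<Rightarrow> (wppdata \<Rightarrow> 'k)" where
  "prodH = bilin_ext (\<lambda>P Q R. ind (R = wpp_prod P Q))"

definition unitH :: "wppdata \<Rightarrow> 'k::field" where
  "unitH = (\<lambda>P. ind (P = empty_wpp))"

definition coprodH_mat :: "wppdata \<Rightarrow> wppdata \<times> wppdata \<Rightarrow> 'k::field" where
  "coprodH_mat P = (\<lambda>(P1, P2). \<Sum>U\<in>{U. upclosed1 P U}.
      ind (P1 = restr P ({1..fst P} - U) \<and> P2 = restr P U))"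

definition coprodH :: "(wppdata \<Rightarrow> 'k::field) \<Rightarrow> (wppdata \<times> wppdata \<Rightarrow> 'k)" where
  "coprodH = lin_ext coprodH_mat"

definition counitH :: "(wppdata \<Rightarrow> 'k::field) \<Rightarrow> 'k" where
  "counitH a = a empty_wpp"

definition packed :: "nat list \<Rightarrow> bool" where
  "packed w \<longleftrightarrow> (\<exists>k. set w = {1..k})"

definition PW :: "nat list set" where
  "PW = {w. packed w}"

definition pack :: "nat list \<Rightarrow> nat list" where
  "pack w = map (\<lambda>x. card {y \<in> set w. y \<le> x}) w"

definition maxl :: "nat list \<Rightarrow> nat" where
  "maxl w = Max (insert 0 (set w))"

definition prodW :: "(nat list \<Rightarrow> 'k::field) \<Rightarrow> (nat list \<Rightarrow> 'k) \<Rightarrow> (nat list \<Rightarrow> 'k)" where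
  "prodW = bilin_ext (\<lambda>u v w. ind (packed w \<and> length w = length u + length v
       \<and> pack (take (length u) w) = u \<and> pack (drop (length u) w) = v))"

definition unitW :: "nat list \<Rightarrow> 'k::field" where
  "unitW = (\<lambda>w. ind (w = []))"

definition coprodW_mat :: "nat list \<Rightarrow> nat list \<times> nat list \<Rightarrow> 'k::field" where
  "coprodW_mat w = (\<lambda>(u, v). \<Sum>k\<in>{0..maxl w}.
      ind (u = filter (\<lambda>x. x \<le> k) w \<and> v = pack (filter (\<lambda>x. k < x) w)))"

definition coprodW :: "(nat list \<Rightarrow> 'k::field) \<Rightarrow> (nat list \<times> nat list \<Rightarrow> 'k)" where
  "coprodW = lin_ext coprodW_mat"

definition counitW :: "(nat list \<Rightarrow> 'k::field) \<Rightarrow> 'k" where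
  "counitW a = a []"

text \<open>A packed word f of length n is read as the surjection i \<mapsto> f ! (i - 1) on [n].\<close>
definition at :: "nat list \<Rightarrow> nat \<Rightarrow> nat" where
  "at f i = f ! (i - 1)"

definition qle :: "wppdata \<Rightarrow> nat \<Rightarrow> nat \<Rightarrow> bool" where
  "qle P i j = (case P of (n, R1, R2) \<Rightarrow> (i, j) \<in> R1 \<or> (i, j) \<in> R2)"

definition qeq :: "wppdata \<Rightarrow> nat \<Rightarrow> nat \<Rightarrow> bool" where
  "qeq P i j \<longleftrightarrow> qle P i j \<and> qle P j i"

definition Lin :: "wppdata \<Rightarrow> nat list set" where
  "Lin P = (case P of (n, R1, R2) \<Rightarrow>
     {f. packed f \<and> length f = n
       \<and> (\<forall>i\<in>{1..n}. \<forall>j\<in>{1..n}. (i, j) \<in> R1 \<longrightarrow> at f i \<le> at f j)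
       \<and> (\<forall>i\<in>{1..n}. \<forall>j\<in>{1..n}. at f i = at f j \<longrightarrow> qeq P i j)})"

definition WLin :: "wppdata \<Rightarrow> nat list set" where
  "WLin P = (case P of (n, R1, R2) \<Rightarrow>
     {f. packed f \<and> length f = n
       \<and> (\<forall>i\<in>{1..n}. \<forall>j\<in>{1..n}. (i, j) \<in> R1 \<longrightarrow> at f i \<le> at f j)
       \<and> (\<forall>i\<in>{1..n}. \<forall>j\<in>{1..n}. (i, j) \<in> R1 \<and> at f i = at f j \<longrightarrow> qeq P i j)})"

definition prec :: "nat list \<Rightarrow> nat list \<Rightarrow> bool" where
  "prec g f \<longleftrightarrow> packed g \<and> packed f \<and> length g = length f
     \<and> (\<forall>i\<in>{1..length f}. \<forall>j\<in>{1..length f}.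
          (at f i \<le> at f j \<longrightarrow> at g i \<le> at g j)
        \<and> (i < j \<and> at f i > at f j \<longrightarrow> at g i > at g j))"

definition phi :: "(wppdata \<Rightarrow> 'k::field) \<Rightarrow> (nat list \<Rightarrow> 'k)" where
  "phi = lin_ext (\<lambda>P f. ind (f \<in> Lin P))"

definition phi' :: "(wppdata \<Rightarrow> 'k::field) \<Rightarrow> (nat list \<Rightarrow> 'k)" where
  "phi' = lin_ext (\<lambda>P g. ind (g \<in> WLin P))"

definition psi :: "(nat list \<Rightarrow> 'k::field) \<Rightarrow> (nat list \<Rightarrow> 'k)" where
  "psi = lin_ext (\<lambda>f g. ind (prec g f))"

end

(*
  Every weak plane poset is wpp_of_word v for a unique packed word v: its total quasi-order
  compares the letters of v, and <=_1, <=_2 are the parts of it going down and up along the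
  natural order of positions. In these bases the matrix of phi' is unitriangular: v lies in
  WLin (wpp_of_word v), and any other element of that set has a strictly smaller ascent weight.
  Hence phi' is bijective.

  Multiplicativity holds because <=_1 relates no positions of different factors of a product, so
  g is in WLin (P Q) exactly when its prefix and suffix standardize into WLin P and WLin Q. For
  the coproduct, cutting g in WLin P between its letters <= k and > k amounts to choosing a
  <=_1-upper set U of positions such that both restrictions are weakly linearly extended by the
  two pieces; this bijection matches the terms on both sides. Finally, for g in WLin P there is
  exactly one f in Lin P with g < f, namely the standardization of the pairs (g_i, v_i), and
  there is none when g is not in WLin P; this gives phi' = psi o phi.
*)
theory Submission
  imports Defs "HOL-Library.Product_Lexorder"
begin

definition rank :: "'a::linorder set \<Rightarrow> 'a \<Rightarrow> nat" where
  "rank C x = card {y\<in>C. y \<le> x}"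

lemma rk_eq_rank: "rk = rank"
  unfolding rk_def rank_def by (intro ext) simp

lemma rank_le_iff:
  assumes "finite C" "x \<in> C" "y \<in> C"
  shows "rank C x \<le> rank C y \<longleftrightarrow> x \<le> y"
proof
  assume "x \<le> y"
  then show "rank C x \<le> rank C y"
    unfolding rank_def using assms by (intro card_mono) auto
next
  assume "rank C x \<le> rank C y"
  moreover have "rank C y < rank C x" if "y < x"
  proof -
    have "{z\<in>C. z \<le> y} \<subset> {z\<in>C. z \<le> x}" using assms that by force
    then show ?thesis unfolding rank_def using assms by (intro psubset_card_mono) auto
  qed
  ultimately show "x \<le> y" by (meson not_le)
qed

lemma rank_eq_iff:
  assumes "finite C" "x \<in> C" "y \<in> C"
  shows "rank C x = rank C y \<longleftrightarrow> x = y"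
  using rank_le_iff[OF assms] rank_le_iff[OF assms(1,3,2)] by auto

lemma rank_in_interval:
  assumes "finite C" "x \<in> C"
  shows "rank C x \<in> {1..card C}"
proof -
  have "{y\<in>C. y \<le> x} \<noteq> {}" using assms by auto
  then have "0 < rank C x" unfolding rank_def using assms by (simp add: card_gt_0_iff)
  moreover have "rank C x \<le> card C" unfolding rank_def using assms by (intro card_mono) auto
  ultimately show ?thesis by simp
qed

lemma bij_betw_rank:
  assumes "finite C"
  shows "bij_betw (rank C) C {1..card C}"
proof -
  have inj: "inj_on (rank C) C" using rank_eq_iff[OF assms] by (auto simp: inj_on_def)
  moreover have "rank C ` C \<subseteq> {1..card C}" using rank_in_interval[OF assms] by auto
  moreover have "card (rank C ` C) = card {1..card C}" using card_image[OF inj] by simp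
  ultimately show ?thesis by (simp add: bij_betw_def card_subset_eq)
qed

lemma rank_interval:
  assumes "x \<in> {1..k}" shows "rank {1..k} x = (x::nat)"
proof -
  have "{y\<in>{1..k}. y \<le> x} = {1..x}" using assms by auto
  then show ?thesis unfolding rank_def by simp
qed

lemma rk_in_interval: "finite S \<Longrightarrow> i \<in> S \<Longrightarrow> rk S i \<in> {1..card S}"
  unfolding rk_eq_rank by (rule rank_in_interval)

lemma rk_eq_iff: "finite S \<Longrightarrow> i \<in> S \<Longrightarrow> j \<in> S \<Longrightarrow> rk S i = rk S j \<longleftrightarrow> i = j"
  unfolding rk_eq_rank by (rule rank_eq_iff)

lemma at_map_upt:
  assumes "i \<in> {1..n}" shows "at (map h [1..<n+1]) i = h i"
proof -
  have "i - 1 < length [1..<n+1]" using assms by auto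
  then show ?thesis unfolding at_def using assms by (simp del: upt_Suc)
qed

lemma at_map: "i \<in> {1..length w} \<Longrightarrow> at (map h w) i = h (at w i)"
  unfolding at_def by auto

lemma set_conv_at: "set f = at f ` {1..length f}"
proof
  show "set f \<subseteq> at f ` {1..length f}"
  proof
    fix x assume "x \<in> set f"
    then obtain p where "p < length f" "f ! p = x" by (auto simp: in_set_conv_nth)
    then show "x \<in> at f ` {1..length f}" unfolding at_def by (intro image_eqI[where x="Suc p"]) auto
  qed
  show "at f ` {1..length f} \<subseteq> set f" unfolding at_def by (auto intro!: nth_mem)
qed

lemma at_in_set: "i \<in> {1..length f} \<Longrightarrow> at f i \<in> set f"
  using set_conv_at by auto

lemma list_eq_atI:
  assumes "length L1 = length L2" "\<And>i. i \<in> {1..length L1} \<Longrightarrow> at L1 i = at L2 i"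
  shows "L1 = L2"
proof (rule nth_equalityI)
  fix p assume "p < length L1"
  then show "L1 ! p = L2 ! p" using assms(2)[of "Suc p"] unfolding at_def by simp
qed fact

lemma list_eq_rkI:
  assumes "finite S" "length L1 = card S" "length L2 = card S"
    and "\<And>i. i \<in> S \<Longrightarrow> at L1 (rk S i) = at L2 (rk S i)"
  shows "L1 = L2"
proof (rule list_eq_atI)
  fix p assume "p \<in> {1..length L1}"
  then have "p \<in> rk S ` S"
    using bij_betw_rank[OF assms(1)] assms(2) unfolding rk_eq_rank bij_betw_def by simp
  then obtain i where "i \<in> S" "rk S i = p" by blast
  then show "at L1 p = at L2 p" using assms(4) by blast
qed (simp add: assms)

lemma at_take: "i \<in> {1..n} \<Longrightarrow> n \<le> length g \<Longrightarrow> at (take n g) i = at g i"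
  unfolding at_def by (intro nth_take) auto

lemma at_drop: "1 \<le> i \<Longrightarrow> n \<le> length g \<Longrightarrow> at (drop n g) i = at g (i + n)"
  unfolding at_def by (simp add: add.commute)

lemma card_image_eq_if_same_fibres:
  assumes "finite S" "\<And>p q. p \<in> S \<Longrightarrow> q \<in> S \<Longrightarrow> g p = g q \<longleftrightarrow> h p = h q"
  shows "card (g ` S) = card (h ` S)"
proof -
  define F where "F x = h (inv_into S g x)" for x
  have F: "F (g p) = h p" if "p \<in> S" for p
    unfolding F_def using that assms(2)[OF inv_into_into[of "g p" g S] that]
    by (simp add: f_inv_into_f)
  have "inj_on F (g ` S)"
    by (rule inj_onI) (use F assms(2) in force)
  moreover have "F ` g ` S = h ` S" using F by (force simp: image_image)
  ultimately show ?thesis by (metis card_image)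
qed

lemma length_filter_eq_card: "length (filter Q g) = card {j\<in>{1..length g}. Q (at g j)}"
proof -
  have "{j\<in>{1..length g}. Q (at g j)} = Suc ` {i. i < length g \<and> Q (g ! i)}"
  proof (rule set_eqI)
    fix j show "j \<in> {j\<in>{1..length g}. Q (at g j)} \<longleftrightarrow> j \<in> Suc ` {i. i < length g \<and> Q (g ! i)}"
      by (cases j) (auto simp: at_def)
  qed
  then show ?thesis by (simp add: length_filter_conv_card card_image)
qed

lemma at_filter_rk:
  assumes i: "i \<in> {1..length g}" "Q (at g i)"
  shows "at (filter Q g) (rk {j\<in>{1..length g}. Q (at g j)} i) = at g i"
proof -
  define p where "p = i - 1"
  have p: "p < length g" "i = Suc p" using i unfolding p_def by auto
  have split: "filter Q g = filter Q (take p g) @ at g i # filter Q (drop (Suc p) g)"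
    using id_take_nth_drop[OF p(1)] i(2) unfolding at_def p(2) by (metis diff_Suc_1 filter.simps(2) filter_append)
  define S' where "S' = {j\<in>{1..length (take p g)}. Q (at (take p g) j)}"
  have "{y\<in>{j\<in>{1..length g}. Q (at g j)}. y \<le> i} = insert i S'"
    using i p unfolding S'_def by (auto simp: at_def)
  moreover have "finite S'" "i \<notin> S'" using p unfolding S'_def by auto
  ultimately have "rk {j\<in>{1..length g}. Q (at g j)} i = Suc (length (filter Q (take p g)))"
    unfolding rk_def length_filter_eq_card S'_def[symmetric] by simp
  then show ?thesis unfolding split by (simp add: at_def nth_append)
qed

section \<open>Standardization of words\<close>

definition standardize :: "nat \<Rightarrow> (nat \<Rightarrow> 'a::linorder) \<Rightarrow> nat list" where
  "standardize n c = map (\<lambda>i. rank (c ` {1..n}) (c i)) [1..<n+1]"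

lemma length_standardize [simp]: "length (standardize n c) = n"
  unfolding standardize_def by simp

lemma at_standardize: "i \<in> {1..n} \<Longrightarrow> at (standardize n c) i = rank (c ` {1..n}) (c i)"
  unfolding standardize_def by (rule at_map_upt)

lemma standardize_le_iff:
  assumes "i \<in> {1..n}" "j \<in> {1..n}"
  shows "at (standardize n c) i \<le> at (standardize n c) j \<longleftrightarrow> c i \<le> c j"
  using assms by (simp add: at_standardize rank_le_iff)

lemma packed_standardize: "packed (standardize n c)"
proof -
  have "set [1..<n+1] = {1..n}" by auto
  then have "set (standardize n c) = rank (c ` {1..n}) ` c ` {1..n}"
    unfolding standardize_def by (simp add: image_image)
  also have "\<dots> = {1..card (c ` {1..n})}"
    using bij_betw_rank[of "c ` {1..n}"] by (simp add: bij_betw_def)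
  finally show ?thesis unfolding packed_def by blast
qed

lemma standardize_cong:
  assumes "\<And>i j. i \<in> {1..n} \<Longrightarrow> j \<in> {1..n} \<Longrightarrow> c i \<le> c j \<longleftrightarrow> d i \<le> d j"
  shows "standardize n c = standardize n d"
proof (rule list_eq_atI)
  fix i assume "i \<in> {1..length (standardize n c)}"
  then have i: "i \<in> {1..n}" by simp
  have same_fibres: "c p = c q \<longleftrightarrow> d p = d q" if "p \<in> {1..n}" "q \<in> {1..n}" for p q
    using assms[OF that] assms[OF that(2,1)] by (simp add: order_eq_iff)
  have "rank (c ` {1..n}) (c i) = card (c ` {j\<in>{1..n}. c j \<le> c i})"
    unfolding rank_def by (rule arg_cong[where f=card]) auto
  also have "\<dots> = card (d ` {j\<in>{1..n}. c j \<le> c i})"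
    by (rule card_image_eq_if_same_fibres) (simp_all add: same_fibres)
  also have "{j\<in>{1..n}. c j \<le> c i} = {j\<in>{1..n}. d j \<le> d i}"
    using assms[OF _ i] by blast
  also have "card (d ` \<dots>) = rank (d ` {1..n}) (d i)"
    unfolding rank_def by (rule arg_cong[where f=card]) auto
  finally show "at (standardize n c) i = at (standardize n d) i"
    using i by (simp add: at_standardize)
qed simp

lemma map_at_upt: "map (at w) [1..<length w + 1] = w"
proof (rule list_eq_atI)
  fix i assume "i \<in> {1..length (map (at w) [1..<length w + 1])}"
  then have "i \<in> {1..length w}" by (simp del: upt_Suc)
  then show "at (map (at w) [1..<length w + 1]) i = at w i" by (rule at_map_upt)
qed (simp del: upt_Suc)

lemma pack_eq_standardize: "pack w = standardize (length w) (at w)"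
proof -
  have "standardize (length w) (at w) = map (rank (set w)) (map (at w) [1..<length w + 1])"
    unfolding standardize_def set_conv_at[of w] by simp
  then show ?thesis unfolding map_at_upt pack_def rank_def by simp
qed

lemma length_pack [simp]: "length (pack w) = length w"
  unfolding pack_def by simp

lemma packed_pack: "packed (pack w)"
  unfolding pack_eq_standardize by (rule packed_standardize)

lemma pack_le_iff:
  assumes "i \<in> {1..length w}" "j \<in> {1..length w}"
  shows "at (pack w) i \<le> at (pack w) j \<longleftrightarrow> at w i \<le> at w j"
  unfolding pack_eq_standardize using assms by (rule standardize_le_iff)

lemma pack_eq_iff:
  assumes "i \<in> {1..length w}" "j \<in> {1..length w}"
  shows "at (pack w) i = at (pack w) j \<longleftrightarrow> at w i = at w j"
  using pack_le_iff[OF assms] pack_le_iff[OF assms(2,1)] by (simp add: order_eq_iff)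

lemma pack_packed:
  assumes "packed w" shows "pack w = w"
proof -
  obtain k where k: "set w = {1..k}" using assms unfolding packed_def by blast
  have "pack w = map (rank {1..k}) w" unfolding pack_def rank_def k ..
  also have "\<dots> = w"
  proof (rule map_idI)
    fix x assume "x \<in> set w"
    then show "rank {1..k} x = x" using k by (intro rank_interval) simp
  qed
  finally show ?thesis .
qed

lemma packed_eqI:
  assumes "packed f" "packed g" "length f = length g"
    and "\<And>i j. i \<in> {1..length f} \<Longrightarrow> j \<in> {1..length f} \<Longrightarrow> at f i \<le> at f j \<longleftrightarrow> at g i \<le> at g j"
  shows "f = g"
proof -
  have "f = standardize (length f) (at f)" using pack_eq_standardize[of f] pack_packed[OF assms(1)] by simp
  also have "\<dots> = standardize (length f) (at g)" by (rule standardize_cong) (rule assms(4))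
  also have "\<dots> = g" using assms(3) pack_eq_standardize[of g] pack_packed[OF assms(2)] by simp
  finally show ?thesis .
qed

lemma maxl_interval:
  assumes "set w = {1..K}" shows "maxl w = K"
proof -
  have "insert 0 (set w) = {0..K}" using assms by auto
  moreover have "Max {0..K} = K" by (rule Max_eqI) auto
  ultimately show ?thesis unfolding maxl_def by simp
qed

lemma pack_shift:
  assumes "set w = {k+1..k+K}"
  shows "pack w = map (\<lambda>x. x - k) w"
proof -
  have "card {y \<in> set w. y \<le> x} = x - k" if "x \<in> set w" for x
  proof -
    have "{y \<in> set w. y \<le> x} = {k+1..x}" using that assms by auto
    then show ?thesis by simp
  qed
  then show ?thesis unfolding pack_def by (intro map_cong) simp_all
qed

lemma set_filter_packed:
  assumes "packed g" "k \<le> maxl g"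
  obtains K where "set g = {1..k+K}" "set (filter (\<lambda>x. x \<le> k) g) = {1..k}"
    "set (filter (\<lambda>x. k < x) g) = {k+1..k+K}"
proof -
  obtain K' where K': "set g = {1..K'}" using assms(1) unfolding packed_def by blast
  then have "k \<le> K'" using assms(2) maxl_interval[OF K'] by simp
  then show thesis using K' by (intro that[of "K' - k"]) auto
qed

lemma packed_maxl: "packed w \<Longrightarrow> set w = {1..maxl w}"
  unfolding packed_def using maxl_interval by metis

section \<open>Linear maps given by matrices\<close>

lemma ind_simps [simp]: "ind True = 1" "ind False = 0"
  by (simp_all add: ind_def)

lemma supp_ind: "supp (\<lambda>x. ind (x \<in> A) :: 'k::zero_neq_one) = A"
  unfolding supp_def ind_def by auto

lemma sum_ind: "finite A \<Longrightarrow> (\<Sum>x\<in>A. ind (P x) :: 'k::comm_semiring_1) = of_nat (card {x\<in>A. P x})"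
  unfolding ind_def by (simp add: sum.If_cases Int_def)

lemma sum_ind_eq:
  assumes "finite T"
  shows "(\<Sum>r\<in>T. ind (r = x) * f r) = ind (x \<in> T) * (f x :: 'k::comm_semiring_1)"
proof -
  have "(\<Sum>r\<in>T. ind (r = x) * f r) = (\<Sum>r\<in>T. if r = x then f r else 0)"
    by (rule sum.cong) (simp_all add: ind_def)
  then show ?thesis using assms by (simp add: sum.delta ind_def)
qed

lemma lin_ext_eq_sum:
  assumes "finite T" "supp a \<subseteq> T"
  shows "lin_ext M a y = (\<Sum>x\<in>T. a x * M x y)"
  unfolding lin_ext_def using assms by (intro sum.mono_neutral_left) (auto simp: supp_def)

lemma supp_lin_ext_subset:
  assumes "\<And>x. x \<in> supp a \<Longrightarrow> supp (M x) \<subseteq> Y"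
  shows "supp (lin_ext M a) \<subseteq> Y"
proof
  fix y assume y: "y \<in> supp (lin_ext M a)"
  show "y \<in> Y"
  proof (rule ccontr)
    assume "y \<notin> Y"
    then have "\<forall>x\<in>supp a. M x y = 0" using assms unfolding supp_def by blast
    then have "lin_ext M a y = 0" unfolding lin_ext_def by simp
    then show False using y unfolding supp_def by simp
  qed
qed

lemma lin_ext_lin_ext:
  assumes fa: "finite (supp a)" and fM: "\<And>x. x \<in> supp a \<Longrightarrow> finite (supp (M x))"
  shows "lin_ext N (lin_ext M a) z = (\<Sum>x\<in>supp a. a x * lin_ext N (M x) z)"
proof -
  define T where "T = (\<Union>x\<in>supp a. supp (M x))"
  have fT: "finite T" unfolding T_def using fa fM by auto
  have sub: "supp (M x) \<subseteq> T" if "x \<in> supp a" for x using that unfolding T_def by blast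
  have "supp (lin_ext M a) \<subseteq> T" unfolding T_def by (intro supp_lin_ext_subset) auto
  then have "lin_ext N (lin_ext M a) z = (\<Sum>y\<in>T. lin_ext M a y * N y z)"
    by (rule lin_ext_eq_sum[OF fT])
  also have "\<dots> = (\<Sum>y\<in>T. \<Sum>x\<in>supp a. a x * (M x y * N y z))"
    unfolding lin_ext_def by (simp add: sum_distrib_right mult.assoc)
  also have "\<dots> = (\<Sum>x\<in>supp a. a x * lin_ext N (M x) z)"
    by (subst sum.swap) (simp add: lin_ext_eq_sum[OF fT sub] sum_distrib_left)
  finally show ?thesis .
qed

lemma lin_ext_add:
  assumes "finite (supp a)" "finite (supp b)"
  shows "lin_ext M (\<lambda>x. a x + b x) y = lin_ext M a y + lin_ext M b y"
proof -
  define T where "T = supp a \<union> supp b"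
  have T: "finite T" "supp a \<subseteq> T" "supp b \<subseteq> T" "supp (\<lambda>x. a x + b x) \<subseteq> T"
    using assms unfolding T_def supp_def by auto
  show ?thesis unfolding lin_ext_eq_sum[OF T(1,2)] lin_ext_eq_sum[OF T(1,3)] lin_ext_eq_sum[OF T(1,4)]
    by (simp add: distrib_right sum.distrib)
qed

lemma lin_ext_diff:
  fixes a b :: "'b \<Rightarrow> 'k::comm_ring_1"
  assumes "finite (supp a)" "finite (supp b)"
  shows "lin_ext M (\<lambda>x. a x - b x) y = lin_ext M a y - lin_ext M b y"
proof -
  define T where "T = supp a \<union> supp b"
  have T: "finite T" "supp a \<subseteq> T" "supp b \<subseteq> T" "supp (\<lambda>x. a x - b x) \<subseteq> T"
    using assms unfolding T_def supp_def by auto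
  show ?thesis unfolding lin_ext_eq_sum[OF T(1,2)] lin_ext_eq_sum[OF T(1,3)] lin_ext_eq_sum[OF T(1,4)]
    by (simp add: left_diff_distrib sum_subtractf)
qed

lemma lin_ext_smult:
  assumes "finite (supp a)"
  shows "lin_ext M (\<lambda>x. c * a x) y = c * lin_ext M a y"
proof -
  have "supp (\<lambda>x. c * a x) \<subseteq> supp a" unfolding supp_def by auto
  then show ?thesis
    unfolding lin_ext_eq_sum[OF assms] by (simp add: lin_ext_eq_sum[OF assms] sum_distrib_left mult.assoc)
qed

lemma bilin_ext_eq_sum:
  assumes "finite A" "finite B" "supp a \<subseteq> A" "supp b \<subseteq> B"
  shows "bilin_ext M a b z = (\<Sum>x\<in>A. \<Sum>y\<in>B. a x * b y * M x y z)"
proof -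
  have "bilin_ext M a b z = (\<Sum>x\<in>supp a. \<Sum>y\<in>B. a x * b y * M x y z)"
    unfolding bilin_ext_def using assms(2,4) by (intro sum.cong refl sum.mono_neutral_left) (auto simp: supp_def)
  also have "\<dots> = (\<Sum>x\<in>A. \<Sum>y\<in>B. a x * b y * M x y z)"
    using assms(1,3) by (intro sum.mono_neutral_left) (auto simp: supp_def)
  finally show ?thesis .
qed

lemma freevec_add:
  assumes "a \<in> freevec A" "b \<in> freevec A" shows "(\<lambda>x. a x + b x :: 'k::monoid_add) \<in> freevec A"
proof -
  have "supp (\<lambda>x. a x + b x) \<subseteq> supp a \<union> supp b" unfolding supp_def by auto
  then show ?thesis using assms unfolding freevec_def by (auto intro: finite_subset)
qed

lemma freevec_diff:
  assumes "a \<in> freevec A" "b \<in> freevec A" shows "(\<lambda>x. a x - b x :: 'k::ab_group_add) \<in> freevec A"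
proof -
  have "supp (\<lambda>x. a x - b x) \<subseteq> supp a \<union> supp b" unfolding supp_def by auto
  then show ?thesis using assms unfolding freevec_def by (auto intro: finite_subset)
qed

lemma freevec_smult: "a \<in> freevec A \<Longrightarrow> (\<lambda>x. c * a x :: 'k::mult_zero) \<in> freevec A"
  unfolding freevec_def supp_def by (auto elim!: rev_finite_subset)

definition delta :: "'a \<Rightarrow> 'a \<Rightarrow> 'k::zero_neq_one" where
  "delta h = (\<lambda>x. ind (x = h))"

lemma supp_delta: "supp (delta h) = {h}"
  unfolding supp_def delta_def ind_def by auto

lemma delta_in_freevec: "h \<in> A \<Longrightarrow> delta h \<in> freevec A"
  by (simp add: freevec_def supp_delta)

lemma lin_ext_delta: "lin_ext M (delta h) = M h"
  unfolding lin_ext_def supp_delta by (simp add: delta_def)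

lemma lin_ext_ind: "finite A \<Longrightarrow> lin_ext N (\<lambda>x. ind (x \<in> A)) z = (\<Sum>x\<in>A. N x z)"
  by (simp add: lin_ext_eq_sum supp_ind)

lemma lin_ext_sum_ind:
  fixes F :: "'i \<Rightarrow> 'b"
  assumes "finite I"
  shows "supp (\<lambda>y. \<Sum>i\<in>I. ind (y = F i) :: 'k::comm_semiring_1) \<subseteq> F ` I"
    and "lin_ext N (\<lambda>y. \<Sum>i\<in>I. ind (y = F i) :: 'k) z = (\<Sum>i\<in>I. N (F i) z)"
proof -
  show sub: "supp (\<lambda>y. \<Sum>i\<in>I. ind (y = F i) :: 'k) \<subseteq> F ` I"
  proof
    fix y assume "y \<in> supp (\<lambda>y. \<Sum>i\<in>I. ind (y = F i) :: 'k)"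
    then have "(\<Sum>i\<in>I. ind (y = F i) :: 'k) \<noteq> 0" unfolding supp_def by simp
    then obtain i where "i \<in> I" "ind (y = F i) \<noteq> (0 :: 'k)" by (meson sum.neutral)
    then show "y \<in> F ` I" by (auto simp: ind_def split: if_splits)
  qed
  have "lin_ext N (\<lambda>y. \<Sum>i\<in>I. ind (y = F i) :: 'k) z = (\<Sum>y\<in>F ` I. \<Sum>i\<in>I. ind (y = F i) * N y z)"
    using assms by (simp only: lin_ext_eq_sum[OF finite_imageI[OF assms] sub] sum_distrib_right)
  also have "\<dots> = (\<Sum>i\<in>I. N (F i) z)"
    using assms by (subst sum.swap) (simp add: sum_ind_eq[of "F ` I", unfolded eq_commute[of _ "F _"]])
  finally show "lin_ext N (\<lambda>y. \<Sum>i\<in>I. ind (y = F i) :: 'k) z = (\<Sum>i\<in>I. N (F i) z)" .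
qed

lemma sum_delta_freevec:
  assumes "finite (supp b)"
  shows "(\<lambda>z. \<Sum>g\<in>supp b. b g * delta g z) = (b :: 'a \<Rightarrow> 'k::comm_semiring_1)"
proof
  fix z
  have "(\<Sum>g\<in>supp b. b g * delta g z) = (\<Sum>g\<in>supp b. if z = g then b g else 0)"
    by (rule sum.cong) (auto simp: delta_def ind_def)
  also have "\<dots> = b z" using assms by (simp add: sum.delta supp_def)
  finally show "(\<Sum>g\<in>supp b. b g * delta g z) = b z" .
qed

lemma lin_ext_image_add:
  fixes M :: "'b \<Rightarrow> 'c \<Rightarrow> 'k::comm_semiring_1"
  assumes "x \<in> lin_ext M ` freevec A" "y \<in> lin_ext M ` freevec A"
  shows "(\<lambda>z. x z + y z) \<in> lin_ext M ` freevec A"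
proof -
  obtain a b where ab: "a \<in> freevec A" "b \<in> freevec A" and "x = lin_ext M a" "y = lin_ext M b"
    using assms by blast
  then have "(\<lambda>z. x z + y z) = lin_ext M (\<lambda>v. a v + b v)"
    by (auto simp: lin_ext_add freevec_def)
  then show ?thesis using freevec_add[OF ab] by (rule image_eqI)
qed

lemma lin_ext_image_lincomb:
  fixes M :: "'b \<Rightarrow> 'c \<Rightarrow> 'k::comm_semiring_1"
  assumes "finite H" "\<And>h. h \<in> H \<Longrightarrow> f h \<in> lin_ext M ` freevec A"
  shows "(\<lambda>z. \<Sum>h\<in>H. c h * f h z) \<in> lin_ext M ` freevec A"
  using assms
proof (induction H rule: finite_induct)
  case empty
  have "(\<lambda>z. \<Sum>h\<in>{}. c h * f h z) = lin_ext M (\<lambda>_. 0)" by (simp add: supp_def lin_ext_def)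
  moreover have "(\<lambda>_. 0) \<in> freevec A" by (simp add: freevec_def supp_def)
  ultimately show ?case by (rule image_eqI)
next
  case (insert h H)
  obtain a where a: "a \<in> freevec A" "f h = lin_ext M a" using insert.prems by blast
  then have "(\<lambda>z. c h * f h z) = lin_ext M (\<lambda>v. c h * a v)"
    by (auto simp: lin_ext_smult freevec_def)
  from this freevec_smult[OF a(1)] have "(\<lambda>z. c h * f h z) \<in> lin_ext M ` freevec A" by (rule image_eqI)
  from lin_ext_image_add[OF this insert.IH] insert show ?case by simp
qed

lemma lin_ext_bilin_ext:
  assumes fa: "finite (supp a)" and fb: "finite (supp b)" and fM: "\<And>x y. finite (supp (M x y))"
  shows "lin_ext N (bilin_ext M a b) z = (\<Sum>x\<in>supp a. \<Sum>y\<in>supp b. a x * b y * lin_ext N (M x y) z)"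
proof -
  define T where "T = (\<Union>x\<in>supp a. \<Union>y\<in>supp b. supp (M x y))"
  have fT: "finite T" unfolding T_def using fa fb fM by blast
  have sub: "supp (M x y) \<subseteq> T" if "x \<in> supp a" "y \<in> supp b" for x y
    using that unfolding T_def by blast
  have "supp (bilin_ext M a b) \<subseteq> T"
    unfolding T_def supp_def bilin_ext_def by (force intro: ccontr[of False] sum.neutral)
  then have "lin_ext N (bilin_ext M a b) z = (\<Sum>r\<in>T. bilin_ext M a b r * N r z)"
    by (rule lin_ext_eq_sum[OF fT])
  also have "\<dots> = (\<Sum>r\<in>T. \<Sum>x\<in>supp a. \<Sum>y\<in>supp b. a x * b y * (M x y r * N r z))"
    unfolding bilin_ext_def by (simp add: sum_distrib_right mult.assoc)
  also have "\<dots> = (\<Sum>x\<in>supp a. \<Sum>y\<in>supp b. \<Sum>r\<in>T. a x * b y * (M x y r * N r z))"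
    by (subst sum.swap) (simp add: sum.swap[of _ T])
  also have "\<dots> = (\<Sum>x\<in>supp a. \<Sum>y\<in>supp b. a x * b y * lin_ext N (M x y) z)"
    by (intro sum.cong refl) (simp add: lin_ext_eq_sum[OF fT sub] sum_distrib_left)
  finally show ?thesis .
qed

lemma sum_swap_nested:
  "(\<Sum>u\<in>U. \<Sum>w\<in>W. \<Sum>x\<in>X. \<Sum>y\<in>Y. f u w x y) = (\<Sum>x\<in>X. \<Sum>y\<in>Y. \<Sum>u\<in>U. \<Sum>w\<in>W. f u w x y)"
proof -
  have "(\<Sum>u\<in>U. \<Sum>w\<in>W. \<Sum>x\<in>X. \<Sum>y\<in>Y. f u w x y) = (\<Sum>u\<in>U. \<Sum>x\<in>X. \<Sum>w\<in>W. \<Sum>y\<in>Y. f u w x y)"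
    by (rule sum.cong[OF refl], rule sum.swap)
  also have "\<dots> = (\<Sum>x\<in>X. \<Sum>u\<in>U. \<Sum>y\<in>Y. \<Sum>w\<in>W. f u w x y)"
    by (subst sum.swap) (rule sum.cong[OF refl], rule sum.cong[OF refl], rule sum.swap)
  also have "\<dots> = (\<Sum>x\<in>X. \<Sum>y\<in>Y. \<Sum>u\<in>U. \<Sum>w\<in>W. f u w x y)"
    by (rule sum.cong[OF refl], rule sum.swap)
  finally show ?thesis .
qed

lemma bilin_ext_lin_ext:
  assumes fa: "finite (supp a)" and fb: "finite (supp b)"
    and fM: "\<And>x. finite (supp (M x))" and fN: "\<And>y. finite (supp (N y))"
  shows "bilin_ext K (lin_ext M a) (lin_ext N b) z
    = (\<Sum>x\<in>supp a. \<Sum>y\<in>supp b. a x * b y * bilin_ext K (M x) (N y) z)"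
proof -
  define U where "U = (\<Union>x\<in>supp a. supp (M x))"
  define W where "W = (\<Union>y\<in>supp b. supp (N y))"
  have fin: "finite U" "finite W" unfolding U_def W_def using fa fb fM fN by blast+
  have "supp (lin_ext M a) \<subseteq> U" "supp (lin_ext N b) \<subseteq> W"
    unfolding U_def W_def by (intro supp_lin_ext_subset; blast)+
  then have "bilin_ext K (lin_ext M a) (lin_ext N b) z
      = (\<Sum>u\<in>U. \<Sum>w\<in>W. lin_ext M a u * lin_ext N b w * K u w z)"
    by (rule bilin_ext_eq_sum[OF fin])
  also have "\<dots> = (\<Sum>u\<in>U. \<Sum>w\<in>W. \<Sum>x\<in>supp a. \<Sum>y\<in>supp b. a x * b y * (M x u * N y w * K u w z))"
    unfolding lin_ext_def sum_product sum_distrib_right by (intro sum.cong refl) (simp add: sum_distrib_left ac_simps)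
  also have "\<dots> = (\<Sum>x\<in>supp a. \<Sum>y\<in>supp b. \<Sum>u\<in>U. \<Sum>w\<in>W. a x * b y * (M x u * N y w * K u w z))"
    by (rule sum_swap_nested)
  also have "\<dots> = (\<Sum>x\<in>supp a. \<Sum>y\<in>supp b. a x * b y * bilin_ext K (M x) (N y) z)"
  proof (intro sum.cong refl)
    fix x y assume "x \<in> supp a" "y \<in> supp b"
    then have "supp (M x) \<subseteq> U" "supp (N y) \<subseteq> W" unfolding U_def W_def by blast+
    then show "(\<Sum>u\<in>U. \<Sum>w\<in>W. a x * b y * (M x u * N y w * K u w z)) = a x * b y * bilin_ext K (M x) (N y) z"
      by (simp add: bilin_ext_eq_sum[OF fin] sum_distrib_left mult.assoc)
  qed
  finally show ?thesis .
qed

locale unitriangular =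
  fixes M :: "'b \<Rightarrow> 'c \<Rightarrow> 'k::field" and \<sigma> :: "'c \<Rightarrow> 'b" and C :: "'c set" and B :: "'b set"
    and r :: "'c \<Rightarrow> nat"
  assumes bij: "bij_betw \<sigma> C B"
    and diag: "\<And>c. c \<in> C \<Longrightarrow> M (\<sigma> c) c = 1"
    and below: "\<And>c c'. c \<in> C \<Longrightarrow> M (\<sigma> c) c' \<noteq> 0 \<Longrightarrow> c' \<noteq> c \<Longrightarrow> c' \<in> C \<and> r c' < r c"
    and finite_row: "\<And>c. c \<in> C \<Longrightarrow> finite (supp (M (\<sigma> c)))"
begin

lemma supp_row: "c \<in> C \<Longrightarrow> supp (M (\<sigma> c)) \<subseteq> C"
  using below unfolding supp_def by blast

lemma lin_ext_in_freevec: "a \<in> freevec B \<Longrightarrow> lin_ext M a \<in> freevec C"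
proof -
  assume a: "a \<in> freevec B"
  have row: "finite (supp (M x)) \<and> supp (M x) \<subseteq> C" if "x \<in> supp a" for x
    using that a bij finite_row supp_row unfolding freevec_def bij_betw_def by blast
  have "supp (lin_ext M a) \<subseteq> (\<Union>x\<in>supp a. supp (M x))" by (rule supp_lin_ext_subset) auto
  moreover have "finite (\<Union>x\<in>supp a. supp (M x))" using a row unfolding freevec_def by blast
  ultimately show ?thesis using row unfolding freevec_def by (blast intro: finite_subset)
qed

lemma kernel_trivial:
  assumes a: "a \<in> freevec B" and zero: "\<And>z. lin_ext M a z = 0"
  shows "a x = 0"
proof (rule ccontr)
  assume "a x \<noteq> 0"
  then have x: "x \<in> supp a" unfolding supp_def by simp
  define K where "K = inv_into C \<sigma> ` supp a"
  have fin: "finite (supp a)" and sub: "supp a \<subseteq> B" using a unfolding freevec_def by auto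
  have "supp a \<subseteq> \<sigma> ` C" using sub bij by (simp add: bij_betw_def)
  then have K: "finite K" "K \<subseteq> C" "K \<noteq> {}"
    using fin x unfolding K_def by (auto simp: inv_into_into)
  have "\<sigma> ` K = (\<lambda>x. x) ` supp a"
    unfolding K_def image_image using \<open>supp a \<subseteq> \<sigma> ` C\<close> by (intro image_cong) (auto simp: f_inv_into_f)
  then have K_image: "\<sigma> ` K = supp a" by simp
  have "Max (r ` K) \<in> r ` K" using K(1,3) by (intro Max_in) auto
  then obtain c0 where c0: "c0 \<in> K" "r c0 = Max (r ` K)" by (auto simp del: Max_in)
  then have c0_max: "r c \<le> r c0" if "c \<in> K" for c using K(1) that by simp
  have off_diag: "M (\<sigma> c) c0 = 0" if "c \<in> K" "c \<noteq> c0" for c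
    using below[of c c0] c0_max[OF that(1)] that K(2) by force
  have "inj_on \<sigma> K" using K(2) bij by (auto simp: bij_betw_def intro: inj_on_subset)
  then have "lin_ext M a c0 = (\<Sum>c\<in>K. a (\<sigma> c) * M (\<sigma> c) c0)"
    unfolding lin_ext_def K_image[symmetric] by (simp add: sum.reindex)
  also have "\<dots> = (\<Sum>c\<in>K. if c = c0 then a (\<sigma> c0) else 0)"
    using off_diag diag[of c0] c0(1) K(2) by (intro sum.cong) auto
  also have "\<dots> = a (\<sigma> c0)" using K(1) c0(1) by simp
  finally have "a (\<sigma> c0) = 0" using zero by simp
  moreover have "\<sigma> c0 \<in> supp a" using K_image c0(1) by blast
  ultimately show False unfolding supp_def by simp
qed

lemma inj_on_lin_ext: "inj_on (lin_ext M) (freevec B)"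
proof (rule inj_onI)
  fix a b assume a: "a \<in> freevec B" and b: "b \<in> freevec B" and eq: "lin_ext M a = lin_ext M b"
  have "lin_ext M (\<lambda>x. a x - b x) z = 0" for z
    using a b eq unfolding freevec_def by (simp add: lin_ext_diff)
  then have "a x - b x = 0" for x by (rule kernel_trivial[OF freevec_diff[OF a b]])
  then show "a = b" by auto
qed

lemma delta_in_image: "c \<in> C \<Longrightarrow> delta c \<in> lin_ext M ` freevec B"
proof (induction "r c" arbitrary: c rule: less_induct)
  case less
  define H where "H = supp (M (\<sigma> c)) - {c}"
  have H: "finite H" "H \<subseteq> C" using finite_row supp_row less.prems unfolding H_def by auto
  have "M (\<sigma> c) = lin_ext M (delta (\<sigma> c))" by (simp add: lin_ext_delta)
  moreover have "delta (\<sigma> c) \<in> freevec B"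
    using bij less.prems by (intro delta_in_freevec) (rule bij_betw_apply)
  ultimately have row: "M (\<sigma> c) \<in> lin_ext M ` freevec B" by (rule image_eqI)
  have "delta h \<in> lin_ext M ` freevec B" if "h \<in> H" for h
    using less.hyps[of h] below[OF less.prems, of h] that unfolding H_def supp_def by blast
  then have "(\<lambda>z. \<Sum>h\<in>H. - M (\<sigma> c) h * delta h z) \<in> lin_ext M ` freevec B"
    by (rule lin_ext_image_lincomb[OF H(1)])
  from lin_ext_image_add[OF row this]
  have "(\<lambda>z. M (\<sigma> c) z + (\<Sum>h\<in>H. - M (\<sigma> c) h * delta h z)) \<in> lin_ext M ` freevec B" .
  moreover have "(\<lambda>z. M (\<sigma> c) z + (\<Sum>h\<in>H. - M (\<sigma> c) h * delta h z)) = delta c"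
  proof
    fix z
    have "(\<Sum>h\<in>H. - M (\<sigma> c) h * delta h z) = (\<Sum>h\<in>H. if h = z then - M (\<sigma> c) h else 0)"
      by (rule sum.cong) (auto simp: delta_def ind_def)
    also have "\<dots> = (if z \<in> H then - M (\<sigma> c) z else 0)" using H(1) by (rule sum.delta)
    finally show "M (\<sigma> c) z + (\<Sum>h\<in>H. - M (\<sigma> c) h * delta h z) = delta c z"
      using diag[OF less.prems] unfolding H_def delta_def supp_def ind_def by auto
  qed
  ultimately show ?case by simp
qed

lemma bij_betw_lin_ext: "bij_betw (lin_ext M) (freevec B) (freevec C)"
proof -
  have "b \<in> lin_ext M ` freevec B" if b: "b \<in> freevec C" for b
  proof -
    have fb: "finite (supp b)" "supp b \<subseteq> C" using b unfolding freevec_def by auto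
    have "(\<lambda>z. \<Sum>g\<in>supp b. b g * delta g z) \<in> lin_ext M ` freevec B"
      by (rule lin_ext_image_lincomb[OF fb(1)]) (use delta_in_image fb(2) in blast)
    then show ?thesis using sum_delta_freevec[OF fb(1)] by simp
  qed
  then show ?thesis using inj_on_lin_ext lin_ext_in_freevec by (auto simp: bij_betw_def)
qed

end

section \<open>Weak plane posets as packed words\<close>

lemma WPP_iff: "(n, R1, R2) \<in> WPP \<longleftrightarrow>
    partial_order_on_set {1..n} R1 \<and> partial_order_on_set {1..n} R2
  \<and> (\<forall>x y. (x, y) \<in> R1 \<and> (x, y) \<in> R2 \<longrightarrow> x = y)
  \<and> trans (R1 \<union> R2)
  \<and> (\<forall>x\<in>{1..n}. \<forall>y\<in>{1..n}. (x, y) \<in> R1 \<union> R2 \<or> (y, x) \<in> R1 \<union> R2)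
  \<and> (\<forall>x\<in>{1..n}. \<forall>y\<in>{1..n}. x \<le> y \<longleftrightarrow> ((y, x) \<in> R1 \<or> (x, y) \<in> R2))"
  unfolding WPP_def is_wpp_def mem_Collect_eq case_prod_conv by (rule refl)

lemma WPP_D:
  assumes "(n, R1, R2) \<in> WPP"
  shows "partial_order_on_set {1..n} R1" "partial_order_on_set {1..n} R2" "trans (R1 \<union> R2)"
    and "\<And>x y. x \<in> {1..n} \<Longrightarrow> y \<in> {1..n} \<Longrightarrow> (x, y) \<in> R1 \<union> R2 \<or> (y, x) \<in> R1 \<union> R2"
    and "\<And>x y. x \<in> {1..n} \<Longrightarrow> y \<in> {1..n} \<Longrightarrow> x \<le> y \<longleftrightarrow> ((y, x) \<in> R1 \<or> (x, y) \<in> R2)"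
  using assms unfolding WPP_iff by blast+

lemma WPP_relations_subset:
  assumes "(n, R1, R2) \<in> WPP"
  shows "R1 \<subseteq> {1..n} \<times> {1..n}" "R2 \<subseteq> {1..n} \<times> {1..n}"
  using WPP_D(1,2)[OF assms] unfolding partial_order_on_set_def by blast+

lemma WPP_orders_iff:
  assumes "(n, R1, R2) \<in> WPP"
  shows "(a, b) \<in> R1 \<longleftrightarrow> a \<in> {1..n} \<and> b \<in> {1..n} \<and> b \<le> a \<and> (a, b) \<in> R1 \<union> R2"
    and "(a, b) \<in> R2 \<longleftrightarrow> a \<in> {1..n} \<and> b \<in> {1..n} \<and> a \<le> b \<and> (a, b) \<in> R1 \<union> R2"
proof -
  have refl: "(a, a) \<in> R1" "(a, a) \<in> R2" if "a \<in> {1..n}" for a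
    using WPP_D(1,2)[OF assms] that unfolding partial_order_on_set_def by blast+
  have in_range: "a \<in> {1..n}" "b \<in> {1..n}" if "(a, b) \<in> R1 \<union> R2"
    using that WPP_relations_subset[OF assms] by auto
  have down: "b \<le> a" if "(a, b) \<in> R1"
    using WPP_D(5)[OF assms in_range(2,1)] that by blast
  have up: "a \<le> b" if "(a, b) \<in> R2"
    using WPP_D(5)[OF assms in_range] that by blast
  show "(a, b) \<in> R1 \<longleftrightarrow> a \<in> {1..n} \<and> b \<in> {1..n} \<and> b \<le> a \<and> (a, b) \<in> R1 \<union> R2"
    using in_range down up[THEN antisym] refl(1) by blast
  show "(a, b) \<in> R2 \<longleftrightarrow> a \<in> {1..n} \<and> b \<in> {1..n} \<and> a \<le> b \<and> (a, b) \<in> R1 \<union> R2"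
    using in_range up down[THEN antisym] refl(2) by blast
qed

lemma card_below_le_iff:
  assumes "finite A" "trans Q" "\<And>x. x \<in> A \<Longrightarrow> (x, x) \<in> Q"
    and "\<And>x y. x \<in> A \<Longrightarrow> y \<in> A \<Longrightarrow> (x, y) \<in> Q \<or> (y, x) \<in> Q"
    and "i \<in> A" "j \<in> A"
  shows "card {k\<in>A. (k, i) \<in> Q} \<le> card {k\<in>A. (k, j) \<in> Q} \<longleftrightarrow> (i, j) \<in> Q"
proof
  assume "(i, j) \<in> Q"
  then show "card {k\<in>A. (k, i) \<in> Q} \<le> card {k\<in>A. (k, j) \<in> Q}"
    using assms(1,2) by (intro card_mono) (auto dest: transD)
next
  assume le: "card {k\<in>A. (k, i) \<in> Q} \<le> card {k\<in>A. (k, j) \<in> Q}"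
  show "(i, j) \<in> Q"
  proof (rule ccontr)
    assume ij: "(i, j) \<notin> Q"
    then have "(j, i) \<in> Q" using assms(4-6) by blast
    then have "{k\<in>A. (k, j) \<in> Q} \<subset> {k\<in>A. (k, i) \<in> Q}"
      using assms(2,3,5) ij by (auto dest: transD)
    then have "card {k\<in>A. (k, j) \<in> Q} < card {k\<in>A. (k, i) \<in> Q}"
      using assms(1) by (intro psubset_card_mono) auto
    then show False using le by simp
  qed
qed

definition wpp_of_word :: "nat list \<Rightarrow> wppdata" where
  "wpp_of_word v = (length v,
     {(a, b). a \<in> {1..length v} \<and> b \<in> {1..length v} \<and> b \<le> a \<and> at v a \<le> at v b},
     {(a, b). a \<in> {1..length v} \<and> b \<in> {1..length v} \<and> a \<le> b \<and> at v a \<le> at v b})"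

lemma wpp_of_word_in_WPP: "wpp_of_word v \<in> WPP"
proof -
  define R where "R r = {(a, b). a \<in> {1..length v} \<and> b \<in> {1..length v} \<and> r a b \<and> at v a \<le> at v b}"
    for r :: "nat \<Rightarrow> nat \<Rightarrow> bool"
  have po: "partial_order_on_set {1..length v} (R r)"
    if "\<And>a. r a a" "\<And>a b. r a b \<Longrightarrow> r b a \<Longrightarrow> a = b" "\<And>a b c. r a b \<Longrightarrow> r b c \<Longrightarrow> r a c" for r
    using that unfolding partial_order_on_set_def antisym_def trans_def R_def by (blast intro: order_trans)
  have union: "R (\<lambda>a b. b \<le> a) \<union> R (\<lambda>a b. a \<le> b)
      = {(a, b). a \<in> {1..length v} \<and> b \<in> {1..length v} \<and> at v a \<le> at v b}"
    unfolding R_def using nat_le_linear by blast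
  have "(length v, R (\<lambda>a b. b \<le> a), R (\<lambda>a b. a \<le> b)) \<in> WPP"
    unfolding WPP_iff union
  proof (intro conjI po)
    show "trans {(a, b). a \<in> {1..length v} \<and> b \<in> {1..length v} \<and> at v a \<le> at v b}"
      unfolding trans_def by (blast intro: order_trans)
  qed (auto simp: R_def nat_le_linear)
  then show ?thesis unfolding wpp_of_word_def R_def .
qed

lemma qle_wpp_of_word:
  "qle (wpp_of_word v) i j \<longleftrightarrow> i \<in> {1..length v} \<and> j \<in> {1..length v} \<and> at v i \<le> at v j"
  unfolding qle_def wpp_of_word_def by (auto simp: nat_le_linear)

lemma qeq_wpp_of_word:
  "qeq (wpp_of_word v) i j \<longleftrightarrow> i \<in> {1..length v} \<and> j \<in> {1..length v} \<and> at v i = at v j"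
  unfolding qeq_def qle_wpp_of_word by auto

lemma WPP_eq_wpp_of_word:
  assumes P: "P \<in> WPP"
  obtains v where "v \<in> PW" "P = wpp_of_word v"
proof -
  obtain n R1 R2 where Pn: "P = (n, R1, R2)" by (cases P)
  define Q where "Q = R1 \<union> R2"
  have "trans Q" and total: "\<And>x y. x \<in> {1..n} \<Longrightarrow> y \<in> {1..n} \<Longrightarrow> (x, y) \<in> Q \<or> (y, x) \<in> Q"
    using WPP_D(3,4)[OF P[unfolded Pn]] unfolding Q_def by blast+
  moreover have "(x, x) \<in> Q" if "x \<in> {1..n}" for x
    using total[OF that that] by blast
  ultimately have Q_iff: "card {k\<in>{1..n}. (k, i) \<in> Q} \<le> card {k\<in>{1..n}. (k, j) \<in> Q} \<longleftrightarrow> (i, j) \<in> Q"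
    if "i \<in> {1..n}" "j \<in> {1..n}" for i j
    using that by (intro card_below_le_iff) auto
  define v where "v = standardize n (\<lambda>i. card {k\<in>{1..n}. (k, i) \<in> Q})"
  have v_le_iff: "at v i \<le> at v j \<longleftrightarrow> (i, j) \<in> Q" if "i \<in> {1..n}" "j \<in> {1..n}" for i j
    unfolding v_def standardize_le_iff[OF that] using Q_iff[OF that] .
  have "(a, b) \<in> R1 \<longleftrightarrow> a \<in> {1..n} \<and> b \<in> {1..n} \<and> b \<le> a \<and> at v a \<le> at v b" for a b
    using WPP_orders_iff(1)[OF P[unfolded Pn], of a b] v_le_iff[of a b] unfolding Q_def by blast
  moreover have "(a, b) \<in> R2 \<longleftrightarrow> a \<in> {1..n} \<and> b \<in> {1..n} \<and> a \<le> b \<and> at v a \<le> at v b" for a b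
    using WPP_orders_iff(2)[OF P[unfolded Pn], of a b] v_le_iff[of a b] unfolding Q_def by blast
  ultimately have "P = wpp_of_word v"
    unfolding Pn wpp_of_word_def by (auto simp: v_def)
  moreover have "v \<in> PW" unfolding PW_def v_def using packed_standardize by simp
  ultimately show thesis using that by blast
qed

lemma inj_on_wpp_of_word: "inj_on wpp_of_word PW"
proof (rule inj_onI)
  fix v w assume "v \<in> PW" "w \<in> PW" and eq: "wpp_of_word v = wpp_of_word w"
  have "length v = length w" using arg_cong[OF eq, of fst] by (simp add: wpp_of_word_def)
  moreover have "at v i \<le> at v j \<longleftrightarrow> at w i \<le> at w j" if "i \<in> {1..length v}" "j \<in> {1..length v}" for i j
    using qle_wpp_of_word[of v i j] qle_wpp_of_word[of w i j] that \<open>length v = length w\<close> eq by simp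
  ultimately show "v = w" using \<open>v \<in> PW\<close> \<open>w \<in> PW\<close> unfolding PW_def by (intro packed_eqI) auto
qed

lemma bij_betw_wpp_of_word: "bij_betw wpp_of_word PW WPP"
proof -
  have "WPP \<subseteq> wpp_of_word ` PW" by (blast elim: WPP_eq_wpp_of_word)
  then have "wpp_of_word ` PW = WPP" using wpp_of_word_in_WPP by blast
  then show ?thesis using inj_on_wpp_of_word by (simp add: bij_betw_def)
qed

definition wlin_pair :: "wppdata \<Rightarrow> nat list \<Rightarrow> nat \<Rightarrow> nat \<Rightarrow> bool" where
  "wlin_pair P f i j \<longleftrightarrow> at f i \<le> at f j \<and> (at f i = at f j \<longrightarrow> qeq P i j)"

lemma WLin_iff: "f \<in> WLin (n, R1, R2) \<longleftrightarrow> packed f \<and> length f = n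
    \<and> (\<forall>i\<in>{1..n}. \<forall>j\<in>{1..n}. (i, j) \<in> R1 \<longrightarrow> wlin_pair (n, R1, R2) f i j)"
  unfolding WLin_def wlin_pair_def by blast

lemma WLinD:
  assumes "f \<in> WLin P" shows "packed f" "length f = fst P"
  using assms by (cases P; simp add: WLin_def)+

lemma LinD:
  assumes "f \<in> Lin P" shows "packed f" "length f = fst P"
  using assms by (cases P; simp add: Lin_def)+

lemma WLin_subset_PW: "WLin P \<subseteq> PW"
  using WLinD(1) unfolding PW_def by blast

lemma packed_set_subset: "packed f \<Longrightarrow> set f \<subseteq> {1..length f}"
  unfolding packed_def using card_length[of f] by auto

lemma finite_packed_of_length: "finite {f. packed f \<and> length f = n}"
proof (rule finite_subset)
  show "{f. packed f \<and> length f = n} \<subseteq> {f. set f \<subseteq> {1..n} \<and> length f = n}"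
    using packed_set_subset by blast
qed (simp add: finite_lists_length_eq)

lemma finite_WLin: "finite (WLin P)"
  using WLinD by (intro finite_subset[OF _ finite_packed_of_length[of "fst P"]]) blast

lemma finite_Lin: "finite (Lin P)"
  using LinD by (intro finite_subset[OF _ finite_packed_of_length[of "fst P"]]) blast

lemma WLin_alt: "f \<in> WLin P \<longleftrightarrow> packed f \<and> length f = fst P
    \<and> (\<forall>i\<in>{1..fst P}. \<forall>j\<in>{1..fst P}. (i, j) \<in> fst (snd P) \<longrightarrow> wlin_pair P f i j)"
  by (cases P) (simp only: WLin_iff fst_conv snd_conv)

lemma Lin_alt: "f \<in> Lin P \<longleftrightarrow> packed f \<and> length f = fst P
    \<and> (\<forall>i\<in>{1..fst P}. \<forall>j\<in>{1..fst P}. (i, j) \<in> fst (snd P) \<longrightarrow> at f i \<le> at f j)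
    \<and> (\<forall>i\<in>{1..fst P}. \<forall>j\<in>{1..fst P}. at f i = at f j \<longrightarrow> qeq P i j)"
  by (cases P) (simp only: Lin_def fst_conv snd_conv case_prod_conv mem_Collect_eq)

lemma first_order_wpp_of_word: "(a, b) \<in> fst (snd (wpp_of_word v))
    \<longleftrightarrow> a \<in> {1..length v} \<and> b \<in> {1..length v} \<and> b \<le> a \<and> at v a \<le> at v b"
  unfolding wpp_of_word_def by simp

lemma length_wpp_of_word [simp]: "fst (wpp_of_word v) = length v"
  unfolding wpp_of_word_def by simp

lemma WLin_wpp_of_word_iff: "g \<in> WLin (wpp_of_word v) \<longleftrightarrow> packed g \<and> length g = length v \<and>
   (\<forall>a\<in>{1..length v}. \<forall>b\<in>{1..length v}. b \<le> a \<longrightarrow> at v a \<le> at v b \<longrightarrow>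
       at g a \<le> at g b \<and> (at g a = at g b \<longrightarrow> at v a = at v b))"
  unfolding WLin_alt wlin_pair_def length_wpp_of_word first_order_wpp_of_word qeq_wpp_of_word by blast

lemma Lin_wpp_of_word_iff: "f \<in> Lin (wpp_of_word v) \<longleftrightarrow> packed f \<and> length f = length v \<and>
   (\<forall>a\<in>{1..length v}. \<forall>b\<in>{1..length v}. b \<le> a \<longrightarrow> at v a \<le> at v b \<longrightarrow> at f a \<le> at f b) \<and>
   (\<forall>a\<in>{1..length v}. \<forall>b\<in>{1..length v}. at f a = at f b \<longrightarrow> at v a = at v b)"
  unfolding Lin_alt length_wpp_of_word first_order_wpp_of_word qeq_wpp_of_word by blast

lemma phi'_apply: "phi' a g = (\<Sum>P\<in>supp a. a P * ind (g \<in> WLin P))"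
  unfolding phi'_def lin_ext_def ..

section \<open>Triangularity\<close>

definition pair_weight :: "nat list \<Rightarrow> nat \<Rightarrow> nat \<Rightarrow> nat" where
  "pair_weight g i j = (if at g i < at g j then 2 else if at g i = at g j then 1 else 0)"

text \<open>Passing from \<open>v\<close> to another element of \<open>WLin (wpp_of_word v)\<close> can only turn ascents into
  plateaus or descents and plateaus into descents, so this weight strictly decreases.\<close>
definition ascent_weight :: "nat list \<Rightarrow> nat" where
  "ascent_weight g = (\<Sum>(i, j) \<in> {(i, j). i \<in> {1..length g} \<and> j \<in> {1..length g} \<and> i < j}.
     pair_weight g i j)"

lemma pair_weight_ge_1_iff: "1 \<le> pair_weight g i j \<longleftrightarrow> at g i \<le> at g j"
  and pair_weight_le_1_iff: "pair_weight g i j \<le> 1 \<longleftrightarrow> at g j \<le> at g i"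
  unfolding pair_weight_def by auto

lemma eq_if_pair_weight_eq:
  assumes "packed g" "packed v" "length g = length v"
    and "\<And>i j. i \<in> {1..length v} \<Longrightarrow> j \<in> {1..length v} \<Longrightarrow> i < j
      \<Longrightarrow> pair_weight g i j = pair_weight v i j"
  shows "g = v"
proof (rule packed_eqI)
  fix i j assume ij: "i \<in> {1..length g}" "j \<in> {1..length g}"
  consider "i = j" | "i < j" | "j < i" by linarith
  then show "at g i \<le> at g j \<longleftrightarrow> at v i \<le> at v j"
  proof cases
    case 2
    then show ?thesis using assms(4)[of i j] assms(3) ij unfolding pair_weight_ge_1_iff[symmetric] by simp
  next
    case 3
    then show ?thesis using assms(4)[of j i] assms(3) ij unfolding pair_weight_le_1_iff[symmetric] by simp
  qed simp
qed (use assms in simp_all)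

lemma word_in_WLin_wpp_of_word: "v \<in> PW \<Longrightarrow> v \<in> WLin (wpp_of_word v)"
  unfolding WLin_wpp_of_word_iff PW_def by auto

lemma WLin_wpp_of_wordD:
  assumes "g \<in> WLin (wpp_of_word v)" "a \<in> {1..length v}" "b \<in> {1..length v}"
    and "b \<le> a" "at v a \<le> at v b"
  shows "at g a \<le> at g b" "at g a = at g b \<Longrightarrow> at v a = at v b"
  using assms unfolding WLin_wpp_of_word_iff by blast+

lemma ascent_weight_less:
  assumes v: "v \<in> PW" and g: "g \<in> WLin (wpp_of_word v)" and "g \<noteq> v"
  shows "ascent_weight g < ascent_weight v"
proof -
  define D where "D = {(i, j). i \<in> {1..length v} \<and> j \<in> {1..length v} \<and> i < j}"
  have len: "length g = length v" using WLinD(2)[OF g] by simp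
  have le: "pair_weight g i j \<le> pair_weight v i j" if "(i, j) \<in> D" for i j
  proof -
    have ij: "i \<in> {1..length v}" "j \<in> {1..length v}" "i \<le> j" using that unfolding D_def by auto
    consider "at v i < at v j" | "at v j \<le> at v i" by linarith
    then show ?thesis
    proof cases
      case 2
      then have "at g j \<le> at g i" "at g j = at g i \<Longrightarrow> at v j = at v i"
        using WLin_wpp_of_wordD[OF g ij(2,1,3)] by blast+
      with 2 show ?thesis unfolding pair_weight_def by auto
    qed (simp add: pair_weight_def)
  qed
  have "\<exists>(i, j) \<in> D. pair_weight g i j < pair_weight v i j"
  proof (rule ccontr)
    assume "\<not> ?thesis"
    then have "pair_weight g i j = pair_weight v i j" if "(i, j) \<in> D" for i j
      using le[OF that] that by fastforce
    then have "g = v"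
      using WLinD(1)[OF g] v len unfolding PW_def by (intro eq_if_pair_weight_eq) (auto simp: D_def)
    then show False using \<open>g \<noteq> v\<close> by contradiction
  qed
  moreover have "finite D" unfolding D_def by (rule finite_subset[of _ "{1..length v} \<times> {1..length v}"]) auto
  ultimately have "(\<Sum>(i, j) \<in> D. pair_weight g i j) < (\<Sum>(i, j) \<in> D. pair_weight v i j)"
    using le by (intro sum_strict_mono_ex1) (auto simp: case_prod_beta)
  then show ?thesis unfolding ascent_weight_def len D_def .
qed

lemma bij_betw_phi': "bij_betw (phi' :: (wppdata \<Rightarrow> 'k::field) \<Rightarrow> _) (freevec WPP) (freevec PW)"
proof -
  interpret unitriangular "\<lambda>P g. ind (g \<in> WLin P) :: 'k" wpp_of_word PW WPP ascent_weight
  proof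
    fix c c' assume "c \<in> PW"
    then show "ind (c \<in> WLin (wpp_of_word c)) = (1::'k)" by (simp add: word_in_WLin_wpp_of_word)
    assume "ind (c' \<in> WLin (wpp_of_word c)) \<noteq> (0::'k)" "c' \<noteq> c"
    then have "c' \<in> WLin (wpp_of_word c)" by (auto simp: ind_def split: if_splits)
    then show "c' \<in> PW \<and> ascent_weight c' < ascent_weight c"
      using \<open>c \<in> PW\<close> \<open>c' \<noteq> c\<close> WLin_subset_PW ascent_weight_less by blast
  qed (simp_all add: bij_betw_wpp_of_word supp_ind finite_WLin)
  show ?thesis unfolding phi'_def by (rule bij_betw_lin_ext)
qed

section \<open>The map \<open>\<psi>\<close>\<close>

lemma Lin_wpp_of_wordD:
  assumes "f \<in> Lin (wpp_of_word v)" "a \<in> {1..length v}" "b \<in> {1..length v}"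
  shows "b \<le> a \<Longrightarrow> at v a \<le> at v b \<Longrightarrow> at f a \<le> at f b"
    and "at f a = at f b \<Longrightarrow> at v a = at v b"
  using assms unfolding Lin_wpp_of_word_iff by blast+

lemma precD:
  assumes "prec g f" "i \<in> {1..length f}" "j \<in> {1..length f}"
  shows "at f i \<le> at f j \<Longrightarrow> at g i \<le> at g j"
    and "i < j \<Longrightarrow> at f j < at f i \<Longrightarrow> at g j < at g i"
  using assms unfolding prec_def by blast+

lemma prec_Lin_imp_WLin:
  assumes f: "f \<in> Lin (wpp_of_word v)" and p: "prec g f"
  shows "g \<in> WLin (wpp_of_word v)"
  unfolding WLin_wpp_of_word_iff
proof (intro conjI ballI impI)
  have len: "length f = length v" using LinD(2)[OF f] by simp
  then show "packed g" "length g = length v" using p unfolding prec_def by auto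
  fix a b assume ab: "a \<in> {1..length v}" "b \<in> {1..length v}" "b \<le> a" "at v a \<le> at v b"
  have f_ab: "at f a \<le> at f b" by (rule Lin_wpp_of_wordD(1)[OF f ab])
  then show "at g a \<le> at g b" using precD(1)[OF p] ab len by simp
  assume g_eq: "at g a = at g b"
  show "at v a = at v b"
  proof (rule ccontr)
    assume ne: "at v a \<noteq> at v b"
    then have "at f a < at f b" using f_ab Lin_wpp_of_wordD(2)[OF f ab(1,2)] by fastforce
    moreover have "b < a" using ne ab(3) by (cases "a = b") auto
    ultimately have "at g a < at g b" using precD(2)[OF p, of b a] ab len by simp
    then show False using g_eq by simp
  qed
qed

text \<open>Given \<open>g \<prec> f\<close> with \<open>f \<in> Lin (wpp_of_word v)\<close>, the word \<open>f\<close> is the standardization of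
  the pairs \<open>(g\<^sub>i, v\<^sub>i)\<close> in lexicographic order; hence \<open>f\<close> is unique.\<close>
lemma prec_Lin_le_iff:
  assumes f: "f \<in> Lin (wpp_of_word v)" and p: "prec g f" and ij: "i \<in> {1..length v}" "j \<in> {1..length v}"
  shows "at f i \<le> at f j \<longleftrightarrow> (at g i, at v i) \<le> (at g j, at v j)"
proof -
  have len: "length f = length v" using LinD(2)[OF f] by simp
  note pD = precD[OF p, unfolded len]
  note fD = Lin_wpp_of_wordD[OF f]
  show ?thesis
  proof
    assume f_ij: "at f i \<le> at f j"
    then have g_ij: "at g i \<le> at g j" using pD(1) ij by blast
    have "at v i \<le> at v j" if g_eq: "at g i = at g j"
    proof (rule ccontr)
      assume v_ji: "\<not> at v i \<le> at v j"
      then have "at f i \<noteq> at f j" using fD(2)[OF ij] by auto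
      then have "at f i < at f j" using f_ij by simp
      have "j \<le> i" using fD(1)[OF ij(2,1)] v_ji f_ij \<open>at f i \<noteq> at f j\<close> by fastforce
      then have "j < i" using v_ji by (cases "i = j") auto
      then have "at g i < at g j" using pD(2)[OF ij(2,1)] \<open>at f i < at f j\<close> by blast
      then show False using g_eq by simp
    qed
    then show "(at g i, at v i) \<le> (at g j, at v j)" using g_ij by (cases "at g i = at g j") auto
  next
    assume lex: "(at g i, at v i) \<le> (at g j, at v j)"
    show "at f i \<le> at f j"
    proof (rule ccontr)
      assume "\<not> at f i \<le> at f j"
      then have f_ji: "at f j < at f i" by simp
      then have "at g j \<le> at g i" using pD(1)[OF ij(2,1)] by simp
      then have g_eq: "at g i = at g j" and v_ij: "at v i \<le> at v j" using lex by auto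
      have "\<not> i < j" using pD(2)[OF ij _ f_ji] g_eq by auto
      then have "j \<le> i" by simp
      then show False using fD(1)[OF ij _ v_ij] f_ji by simp
    qed
  qed
qed

lemma prec_Lin_witness:
  assumes g: "g \<in> WLin (wpp_of_word v)"
  defines "f \<equiv> standardize (length v) (\<lambda>i. (at g i, at v i))"
  shows "f \<in> Lin (wpp_of_word v)" "prec g f"
proof -
  have f_le_iff: "at f i \<le> at f j \<longleftrightarrow> (at g i, at v i) \<le> (at g j, at v j)"
    if "i \<in> {1..length v}" "j \<in> {1..length v}" for i j
    unfolding f_def by (rule standardize_le_iff[OF that])
  note gD = WLin_wpp_of_wordD[OF g]
  show "f \<in> Lin (wpp_of_word v)" unfolding Lin_wpp_of_word_iff
  proof (intro conjI ballI impI)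
    show "packed f" "length f = length v" unfolding f_def by (simp_all add: packed_standardize)
    fix a b assume ab: "a \<in> {1..length v}" "b \<in> {1..length v}"
    {
      assume "b \<le> a" "at v a \<le> at v b"
      then show "at f a \<le> at f b" using gD[OF ab] f_le_iff[OF ab] by fastforce
    }
    assume "at f a = at f b"
    then show "at v a = at v b" using f_le_iff[OF ab] f_le_iff[OF ab(2,1)] by auto
  qed
  show "prec g f" unfolding prec_def
  proof (intro conjI ballI impI)
    show "packed g" "packed f" "length g = length f"
      using WLinD[OF g] unfolding f_def by (simp_all add: packed_standardize)
    fix i j assume "i \<in> {1..length f}" "j \<in> {1..length f}"
    then have ij: "i \<in> {1..length v}" "j \<in> {1..length v}" unfolding f_def by simp_all
    {
      assume "at f i \<le> at f j"
      then show "at g i \<le> at g j" using f_le_iff[OF ij] by auto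
    }
    assume "i < j \<and> at f j < at f i"
    then have "i \<le> j" "(at g j, at v j) < (at g i, at v i)" using f_le_iff[OF ij] by auto
    then show "at g j < at g i" using gD[OF ij(2,1)] by fastforce
  qed
qed

lemma card_Lin_prec:
  "card {f \<in> Lin (wpp_of_word v). prec g f} = (if g \<in> WLin (wpp_of_word v) then 1 else 0)"
proof (cases "g \<in> WLin (wpp_of_word v)")
  case True
  define f0 where "f0 = standardize (length v) (\<lambda>i. (at g i, at v i))"
  have f0: "f0 \<in> Lin (wpp_of_word v)" "prec g f0" using prec_Lin_witness[OF True] unfolding f0_def by auto
  have "f = f0" if f: "f \<in> Lin (wpp_of_word v)" "prec g f" for f
  proof (rule packed_eqI)
    show "packed f" "packed f0" "length f = length f0" using LinD f f0(1) by auto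
    fix i j assume "i \<in> {1..length f}" "j \<in> {1..length f}"
    then have "i \<in> {1..length v}" "j \<in> {1..length v}" using LinD(2)[OF f(1)] by simp_all
    then show "at f i \<le> at f j \<longleftrightarrow> at f0 i \<le> at f0 j"
      using prec_Lin_le_iff[OF f] prec_Lin_le_iff[OF f0] by simp
  qed
  then have "{f \<in> Lin (wpp_of_word v). prec g f} = {f0}" using f0 by blast
  then show ?thesis using True by simp
next
  case False
  then have none: "{f \<in> Lin (wpp_of_word v). prec g f} = {}" using prec_Lin_imp_WLin by blast
  show ?thesis using False unfolding none by simp
qed

lemma phi'_eq_psi_phi:
  assumes a: "a \<in> freevec WPP"
  shows "phi' a = psi (phi (a :: wppdata \<Rightarrow> 'k::field))"
proof
  fix g
  have fin: "finite (supp a)" using a unfolding freevec_def by simp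
  have "psi (phi a) g = (\<Sum>P\<in>supp a. a P * of_nat (card {f\<in>Lin P. prec g f}))"
    unfolding psi_def phi_def
    by (simp add: lin_ext_lin_ext[OF fin] supp_ind finite_Lin lin_ext_ind sum_ind)
  also have "\<dots> = (\<Sum>P\<in>supp a. a P * ind (g \<in> WLin P))"
  proof (rule sum.cong[OF refl])
    fix P assume "P \<in> supp a"
    then obtain v where "P = wpp_of_word v"
      using a unfolding freevec_def by (auto elim: WPP_eq_wpp_of_word)
    then show "a P * of_nat (card {f\<in>Lin P. prec g f}) = a P * ind (g \<in> WLin P)"
      by (simp add: card_Lin_prec ind_def)
  qed
  finally show "phi' a g = psi (phi a) g" by (simp add: phi'_apply)
qed

lemma Nil_in_WLin_iff: "P \<in> WPP \<Longrightarrow> [] \<in> WLin P \<longleftrightarrow> P = empty_wpp"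
proof (cases P)
  case (fields n R1 R2)
  assume "P \<in> WPP"
  then have "n = 0 \<Longrightarrow> R1 = {} \<and> R2 = {}" using WPP_relations_subset fields by fastforce
  moreover have "packed []" unfolding packed_def by auto
  ultimately show ?thesis unfolding fields WLin_iff empty_wpp_def by auto
qed

lemma phi'_unit: "phi' (unitH :: wppdata \<Rightarrow> 'k::field) = unitW"
proof
  fix g
  have "empty_wpp \<in> WPP" unfolding empty_wpp_def WPP_iff partial_order_on_set_def by auto
  then have "g \<in> WLin empty_wpp \<longleftrightarrow> g = []"
    using WLinD(2)[of g empty_wpp] Nil_in_WLin_iff[of empty_wpp] by (auto simp: empty_wpp_def)
  moreover have "supp (unitH :: wppdata \<Rightarrow> 'k) = {empty_wpp}" unfolding supp_def unitH_def ind_def by auto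
  ultimately show "phi' (unitH :: wppdata \<Rightarrow> 'k) g = unitW g"
    unfolding phi'_apply unitH_def unitW_def by simp
qed

lemma phi'_counit:
  assumes a: "a \<in> freevec WPP"
  shows "counitW (phi' a) = counitH (a :: wppdata \<Rightarrow> 'k::field)"
proof -
  have "counitW (phi' a) = (\<Sum>P\<in>supp a. a P * ind (P = empty_wpp))"
    unfolding counitW_def phi'_apply
    using a Nil_in_WLin_iff unfolding freevec_def by (intro sum.cong) auto
  also have "\<dots> = (\<Sum>P\<in>supp a. if P = empty_wpp then a P else 0)" by (rule sum.cong) (simp_all add: ind_def)
  also have "\<dots> = a empty_wpp"
    using a unfolding freevec_def by (simp add: sum.delta supp_def)
  finally show ?thesis unfolding counitH_def .
qed

section \<open>Multiplicativity\<close>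

lemma wpp_prod_eq: "wpp_prod (n, R1, R2) (m, S1, S2) =
  (n + m, R1 \<union> shift_rel n S1, R2 \<union> shift_rel n S2 \<union> {(i, j). i \<in> {1..n} \<and> j \<in> {n+1..n+m}})"
  unfolding wpp_prod_def by simp

lemma shift_rel_iff: "(a, b) \<in> shift_rel k S \<longleftrightarrow> k \<le> a \<and> k \<le> b \<and> (a - k, b - k) \<in> S"
  unfolding shift_rel_def by force

lemma qeq_wpp_prod_left:
  assumes P: "(n, R1, R2) \<in> WPP" and Q: "(m, S1, S2) \<in> WPP" and ij: "i \<in> {1..n}" "j \<in> {1..n}"
  shows "qeq (wpp_prod (n, R1, R2) (m, S1, S2)) i j \<longleftrightarrow> qeq (n, R1, R2) i j"
proof -
  have "(a, b) \<notin> shift_rel n S1 \<union> shift_rel n S2" if "a \<in> {1..n}" for a b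
    using that WPP_relations_subset[OF Q] by (auto simp: shift_rel_iff)
  then show ?thesis using ij unfolding qeq_def qle_def wpp_prod_eq by auto
qed

lemma qeq_wpp_prod_right:
  assumes P: "(n, R1, R2) \<in> WPP" and Q: "(m, S1, S2) \<in> WPP" and ij: "1 \<le> i" "1 \<le> j"
  shows "qeq (wpp_prod (n, R1, R2) (m, S1, S2)) (i + n) (j + n) \<longleftrightarrow> qeq (m, S1, S2) i j"
proof -
  have "(a + n, b + n) \<notin> R1 \<union> R2" if "1 \<le> a" for a b
    using that WPP_relations_subset[OF P] by auto
  moreover have "(a + n, b + n) \<in> shift_rel n S \<longleftrightarrow> (a, b) \<in> S" for a b S
    unfolding shift_rel_iff by simp
  ultimately show ?thesis using ij unfolding qeq_def qle_def wpp_prod_eq by auto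
qed

lemma wlin_pair_wpp_prod_left:
  assumes "(n, R1, R2) \<in> WPP" "(m, S1, S2) \<in> WPP" "length g = n + m" "i \<in> {1..n}" "j \<in> {1..n}"
  shows "wlin_pair (wpp_prod (n, R1, R2) (m, S1, S2)) g i j \<longleftrightarrow> wlin_pair (n, R1, R2) (pack (take n g)) i j"
proof -
  have ij: "i \<in> {1..length (take n g)}" "j \<in> {1..length (take n g)}" using assms(3-5) by auto
  have "at (take n g) i = at g i" "at (take n g) j = at g j" using assms(3-5) by (simp_all add: at_take)
  then show ?thesis unfolding wlin_pair_def pack_le_iff[OF ij] pack_eq_iff[OF ij]
    qeq_wpp_prod_left[OF assms(1,2,4,5)] by simp
qed

lemma wlin_pair_wpp_prod_right:
  assumes "(n, R1, R2) \<in> WPP" "(m, S1, S2) \<in> WPP" "length g = n + m" "i \<in> {1..m}" "j \<in> {1..m}"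
  shows "wlin_pair (wpp_prod (n, R1, R2) (m, S1, S2)) g (i + n) (j + n)
    \<longleftrightarrow> wlin_pair (m, S1, S2) (pack (drop n g)) i j"
proof -
  have ij: "i \<in> {1..length (drop n g)}" "j \<in> {1..length (drop n g)}" using assms(3-5) by auto
  have "at (drop n g) i = at g (i + n)" "at (drop n g) j = at g (j + n)"
    using assms(3-5) by (simp_all add: at_drop)
  moreover have "1 \<le> i" "1 \<le> j" using assms(4,5) by simp_all
  ultimately show ?thesis unfolding wlin_pair_def pack_le_iff[OF ij] pack_eq_iff[OF ij]
    using qeq_wpp_prod_right[OF assms(1,2)] by simp
qed

lemma ball_union_shift_rel_iff:
  assumes R: "R \<subseteq> {1..n} \<times> {1..n}" and S: "S \<subseteq> {1..m} \<times> {1..m}"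
  shows "(\<forall>i\<in>{1..n+m}. \<forall>j\<in>{1..n+m}. (i, j) \<in> R \<union> shift_rel n S \<longrightarrow> Q i j)
    \<longleftrightarrow> (\<forall>i\<in>{1..n}. \<forall>j\<in>{1..n}. (i, j) \<in> R \<longrightarrow> Q i j)
      \<and> (\<forall>i\<in>{1..m}. \<forall>j\<in>{1..m}. (i, j) \<in> S \<longrightarrow> Q (i + n) (j + n))"
proof (intro iffI conjI ballI impI)
  fix i j assume all: "\<forall>i\<in>{1..n+m}. \<forall>j\<in>{1..n+m}. (i, j) \<in> R \<union> shift_rel n S \<longrightarrow> Q i j"
  show "Q i j" if "i \<in> {1..n}" "j \<in> {1..n}" "(i, j) \<in> R" using all that by auto
  assume ij: "i \<in> {1..m}" "j \<in> {1..m}" "(i, j) \<in> S"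
  then have "(i + n, j + n) \<in> shift_rel n S" unfolding shift_rel_iff by simp
  then show "Q (i + n) (j + n)" using all ij(1,2) by auto
next
  fix i j assume both: "(\<forall>i\<in>{1..n}. \<forall>j\<in>{1..n}. (i, j) \<in> R \<longrightarrow> Q i j)
    \<and> (\<forall>i\<in>{1..m}. \<forall>j\<in>{1..m}. (i, j) \<in> S \<longrightarrow> Q (i + n) (j + n))"
  assume "(i, j) \<in> R \<union> shift_rel n S"
  then show "Q i j"
  proof
    assume "(i, j) \<in> R" then show ?thesis using both R by auto
  next
    assume "(i, j) \<in> shift_rel n S"
    then have "(i - n, j - n) \<in> S" "i = (i - n) + n" "j = (j - n) + n" unfolding shift_rel_iff by auto
    moreover from this(1) have "i - n \<in> {1..m}" "j - n \<in> {1..m}" using S by auto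
    ultimately show ?thesis using both by metis
  qed
qed

text \<open>No pair of positions in different factors is comparable for \<open>\<le>\<^sub>1\<close>, so the conditions
  defining \<open>WLin\<close> split into conditions on the two factors.\<close>
lemma WLin_wpp_prod_iff:
  assumes P: "(n, R1, R2) \<in> WPP" and Q: "(m, S1, S2) \<in> WPP"
  shows "g \<in> WLin (wpp_prod (n, R1, R2) (m, S1, S2)) \<longleftrightarrow> packed g \<and> length g = n + m
    \<and> pack (take n g) \<in> WLin (n, R1, R2) \<and> pack (drop n g) \<in> WLin (m, S1, S2)"
proof -
  define PQ where "PQ = wpp_prod (n, R1, R2) (m, S1, S2)"
  have "g \<in> WLin PQ \<longleftrightarrow> packed g \<and> length g = n + m
      \<and> (\<forall>i\<in>{1..n+m}. \<forall>j\<in>{1..n+m}. (i, j) \<in> R1 \<union> shift_rel n S1 \<longrightarrow> wlin_pair PQ g i j)"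
    unfolding PQ_def wpp_prod_eq WLin_iff ..
  also have "\<dots> \<longleftrightarrow> packed g \<and> length g = n + m
      \<and> (\<forall>i\<in>{1..n}. \<forall>j\<in>{1..n}. (i, j) \<in> R1 \<longrightarrow> wlin_pair PQ g i j)
      \<and> (\<forall>i\<in>{1..m}. \<forall>j\<in>{1..m}. (i, j) \<in> S1 \<longrightarrow> wlin_pair PQ g (i + n) (j + n))"
    unfolding ball_union_shift_rel_iff[OF WPP_relations_subset(1)[OF P] WPP_relations_subset(1)[OF Q]] ..
  finally show ?thesis
    unfolding PQ_def WLin_iff[of "pack _"]
    using wlin_pair_wpp_prod_left[OF P Q, of g] wlin_pair_wpp_prod_right[OF P Q, of g]
    by (auto simp: packed_pack)
qed

definition wqsym_prod_coeff :: "nat list \<Rightarrow> nat list \<Rightarrow> nat list \<Rightarrow> 'k::field" where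
  "wqsym_prod_coeff u v w = ind (packed w \<and> length w = length u + length v
     \<and> pack (take (length u) w) = u \<and> pack (drop (length u) w) = v)"

lemma prodW_eq: "prodW = bilin_ext wqsym_prod_coeff"
  unfolding prodW_def wqsym_prod_coeff_def[abs_def] ..

lemma WLin_prod_coefficient:
  assumes P: "P \<in> WPP" and Q: "Q \<in> WPP"
  shows "bilin_ext wqsym_prod_coeff (\<lambda>u. ind (u \<in> WLin P)) (\<lambda>v. ind (v \<in> WLin Q)) g
    = (ind (g \<in> WLin (wpp_prod P Q)) :: 'k::field)"
proof -
  obtain n R1 R2 m S1 S2 where PQ: "P = (n, R1, R2)" "Q = (m, S1, S2)" by (cases P, cases Q)
  define g1 g2 where "g1 = pack (take n g)" and "g2 = pack (drop n g)"
  define c :: 'k where "c = ind (packed g \<and> length g = n + m)"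
  have coeff: "wqsym_prod_coeff u v g = ind (u = g1) * (ind (v = g2) * c)"
    if "u \<in> WLin P" "v \<in> WLin Q" for u v
    using WLinD(2)[OF that(1)] WLinD(2)[OF that(2)]
    unfolding wqsym_prod_coeff_def PQ g1_def g2_def c_def ind_def by auto
  have "bilin_ext wqsym_prod_coeff (\<lambda>u. ind (u \<in> WLin P)) (\<lambda>v. ind (v \<in> WLin Q)) g
    = (\<Sum>u\<in>WLin P. \<Sum>v\<in>WLin Q. ind (u \<in> WLin P) * ind (v \<in> WLin Q) * wqsym_prod_coeff u v g)"
    by (rule bilin_ext_eq_sum[OF finite_WLin finite_WLin]) (simp_all add: supp_ind)
  also have "\<dots> = (\<Sum>u\<in>WLin P. ind (u = g1) * (\<Sum>v\<in>WLin Q. ind (v = g2) * c))"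
    by (simp add: coeff sum_distrib_left)
  also have "\<dots> = ind (g1 \<in> WLin P) * (ind (g2 \<in> WLin Q) * c)"
    by (simp only: sum_ind_eq[OF finite_WLin])
  also have "\<dots> = ind (g \<in> WLin (wpp_prod P Q))"
    using WLin_wpp_prod_iff[of n R1 R2 m S1 S2 g] P Q unfolding PQ g1_def g2_def c_def ind_def by auto
  finally show ?thesis .
qed

lemma phi'_mult:
  assumes a: "a \<in> freevec WPP" and b: "b \<in> freevec WPP"
  shows "phi' (prodH a b) = prodW (phi' a) (phi' (b :: wppdata \<Rightarrow> 'k::field))"
proof
  fix g
  have fin: "finite (supp a)" "finite (supp b)" and sub: "supp a \<subseteq> WPP" "supp b \<subseteq> WPP"
    using a b unfolding freevec_def by auto
  have "prodH a b = bilin_ext (\<lambda>P Q. delta (wpp_prod P Q)) a b"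
    unfolding prodH_def delta_def ..
  then have "phi' (prodH a b) g = (\<Sum>P\<in>supp a. \<Sum>Q\<in>supp b. a P * b Q * ind (g \<in> WLin (wpp_prod P Q)))"
    unfolding phi'_def by (simp add: lin_ext_bilin_ext[OF fin] supp_delta lin_ext_delta)
  also have "\<dots> = (\<Sum>P\<in>supp a. \<Sum>Q\<in>supp b.
      a P * b Q * bilin_ext wqsym_prod_coeff (\<lambda>u. ind (u \<in> WLin P)) (\<lambda>v. ind (v \<in> WLin Q)) g)"
    using sub by (intro sum.cong refl) (simp add: WLin_prod_coefficient subsetD)
  also have "\<dots> = prodW (phi' a) (phi' b) g"
    unfolding prodW_eq phi'_def
    by (rule bilin_ext_lin_ext[OF fin, symmetric]) (simp_all add: supp_ind finite_WLin)
  finally show "phi' (prodH a b) g = prodW (phi' a) (phi' b) g" .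
qed

section \<open>Comultiplicativity\<close>

lemma qeq_restr:
  assumes "finite S" "i \<in> S" "j \<in> S"
  shows "qeq (restr (n, R1, R2) S) (rk S i) (rk S j) \<longleftrightarrow> qeq (n, R1, R2) i j"
proof -
  have "(rk S i, rk S j) \<in> {(rk S i, rk S j) |i j. (i, j) \<in> R \<and> i \<in> S \<and> j \<in> S} \<longleftrightarrow> (i, j) \<in> R"
    if "i \<in> S" "j \<in> S" for R i j
  proof
    assume "(rk S i, rk S j) \<in> {(rk S i, rk S j) |i j. (i, j) \<in> R \<and> i \<in> S \<and> j \<in> S}"
    then obtain i' j' where "(i', j') \<in> R" "i' \<in> S" "j' \<in> S" "rk S i = rk S i'" "rk S j = rk S j'"
      by blast
    moreover from this have "i' = i" "j' = j" using rk_eq_iff[OF assms(1)] that by auto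
    ultimately show "(i, j) \<in> R" by simp
  qed (use that in blast)
  then show ?thesis using assms(2,3) unfolding qeq_def qle_def restr_def by simp
qed

lemma WLin_restr_iff:
  assumes S: "S \<subseteq> {1..n}"
  shows "f \<in> WLin (restr (n, R1, R2) S) \<longleftrightarrow> packed f \<and> length f = card S \<and>
    (\<forall>i\<in>S. \<forall>j\<in>S. (i, j) \<in> R1 \<longrightarrow> at f (rk S i) \<le> at f (rk S j)
        \<and> (at f (rk S i) = at f (rk S j) \<longrightarrow> qeq (n, R1, R2) i j))"
proof -
  have fin: "finite S" using S finite_subset by blast
  define R where "R T = {(rk S i, rk S j) |i j. (i, j) \<in> T \<and> i \<in> S \<and> j \<in> S}" for T
  have eq: "restr (n, R1, R2) S = (card S, R R1, R R2)"
    unfolding restr_def R_def by simp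
  have "f \<in> WLin (restr (n, R1, R2) S) \<longleftrightarrow> packed f \<and> length f = card S \<and>
      (\<forall>p\<in>{1..card S}. \<forall>q\<in>{1..card S}. (p, q) \<in> R R1 \<longrightarrow> wlin_pair (restr (n, R1, R2) S) f p q)"
    unfolding eq WLin_iff ..
  also have "\<dots> \<longleftrightarrow> packed f \<and> length f = card S \<and>
      (\<forall>i\<in>S. \<forall>j\<in>S. (i, j) \<in> R1 \<longrightarrow> wlin_pair (restr (n, R1, R2) S) f (rk S i) (rk S j))"
  proof (intro conj_cong refl iffI ballI impI)
    fix i j assume all: "\<forall>p\<in>{1..card S}. \<forall>q\<in>{1..card S}. (p, q) \<in> R R1 \<longrightarrow> wlin_pair (restr (n, R1, R2) S) f p q"
      and ij: "i \<in> S" "j \<in> S" "(i, j) \<in> R1"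
    then show "wlin_pair (restr (n, R1, R2) S) f (rk S i) (rk S j)"
      using rk_in_interval[OF fin] unfolding R_def by blast
  next
    fix p q assume all: "\<forall>i\<in>S. \<forall>j\<in>S. (i, j) \<in> R1 \<longrightarrow> wlin_pair (restr (n, R1, R2) S) f (rk S i) (rk S j)"
      and "(p, q) \<in> R R1"
    then show "wlin_pair (restr (n, R1, R2) S) f p q" unfolding R_def by blast
  qed
  finally show ?thesis unfolding wlin_pair_def using qeq_restr[OF fin] by simp
qed

definition positions_above :: "nat \<Rightarrow> nat list \<Rightarrow> nat \<Rightarrow> nat set" where
  "positions_above n g k = {i\<in>{1..n}. k < at g i}"

lemma positions_not_above: "{j\<in>{1..n}. at g j \<le> k} = {1..n} - positions_above n g k"
  unfolding positions_above_def by auto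

text \<open>Cutting \<open>g\<close> between the letters \<open>\<le> k\<close> and \<open>> k\<close> is compatible with \<open>\<le>\<^sub>1\<close> exactly
  when the positions of the large letters form a \<open>\<le>\<^sub>1\<close>-upper set: a pair going from a large to a
  small letter is never weakly increasing, and a pair going from a small to a large one always is.\<close>
lemma wlin_pairs_split:
  fixes g :: "nat list" and k :: nat
  assumes R1: "R1 \<subseteq> {1..n} \<times> {1..n}"
  defines "U \<equiv> positions_above n g k"
  shows "(\<forall>i\<in>{1..n}. \<forall>j\<in>{1..n}. (i, j) \<in> R1 \<longrightarrow> wlin_pair P g i j) \<longleftrightarrow>
      (\<forall>i j. (i, j) \<in> R1 \<and> i \<in> U \<longrightarrow> j \<in> U)
    \<and> (\<forall>i\<in>{1..n} - U. \<forall>j\<in>{1..n} - U. (i, j) \<in> R1 \<longrightarrow> wlin_pair P g i j)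
    \<and> (\<forall>i\<in>U. \<forall>j\<in>U. (i, j) \<in> R1 \<longrightarrow> wlin_pair P g i j)"
proof (intro iffI conjI allI impI ballI)
  fix i j assume all: "\<forall>i\<in>{1..n}. \<forall>j\<in>{1..n}. (i, j) \<in> R1 \<longrightarrow> wlin_pair P g i j"
  {
    assume ij: "(i, j) \<in> R1 \<and> i \<in> U"
    then have "i \<in> {1..n}" "j \<in> {1..n}" using R1 by auto
    then have "at g i \<le> at g j" using all ij unfolding wlin_pair_def by blast
    then show "j \<in> U" using ij \<open>j \<in> {1..n}\<close> unfolding U_def positions_above_def by auto
  }
  show "wlin_pair P g i j" if "i \<in> {1..n} - U" "j \<in> {1..n} - U" "(i, j) \<in> R1"
    using all that by blast
  show "wlin_pair P g i j" if "i \<in> U" "j \<in> U" "(i, j) \<in> R1"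
    using all that unfolding U_def positions_above_def by blast
next
  fix i j assume split: "(\<forall>i j. (i, j) \<in> R1 \<and> i \<in> U \<longrightarrow> j \<in> U)
    \<and> (\<forall>i\<in>{1..n} - U. \<forall>j\<in>{1..n} - U. (i, j) \<in> R1 \<longrightarrow> wlin_pair P g i j)
    \<and> (\<forall>i\<in>U. \<forall>j\<in>U. (i, j) \<in> R1 \<longrightarrow> wlin_pair P g i j)"
    and ij: "i \<in> {1..n}" "j \<in> {1..n}" "(i, j) \<in> R1"
  have up: "\<And>i j. (i, j) \<in> R1 \<Longrightarrow> i \<in> U \<Longrightarrow> j \<in> U"
    and low: "\<And>i j. i \<in> {1..n} - U \<Longrightarrow> j \<in> {1..n} - U \<Longrightarrow> (i, j) \<in> R1 \<Longrightarrow> wlin_pair P g i j"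
    and high: "\<And>i j. i \<in> U \<Longrightarrow> j \<in> U \<Longrightarrow> (i, j) \<in> R1 \<Longrightarrow> wlin_pair P g i j"
    using split by blast+
  consider "i \<in> U" | "i \<notin> U" "j \<notin> U" | "i \<notin> U" "j \<in> U" by blast
  then show "wlin_pair P g i j"
  proof cases
    case 1
    then show ?thesis using high up ij(3) by blast
  next
    case 2
    then show ?thesis using low ij by blast
  next
    case 3
    then have "at g i < at g j" using ij unfolding U_def positions_above_def by auto
    then show ?thesis unfolding wlin_pair_def by simp
  qed
qed

lemma WLin_restr_filter_le_iff:
  fixes g :: "nat list" and k :: nat
  assumes g: "packed g" "length g = n" "k \<le> maxl g"
  defines "S \<equiv> {1..n} - positions_above n g k"
  shows "filter (\<lambda>x. x \<le> k) g \<in> WLin (restr (n, R1, R2) S)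
    \<longleftrightarrow> (\<forall>i\<in>S. \<forall>j\<in>S. (i, j) \<in> R1 \<longrightarrow> wlin_pair (n, R1, R2) g i j)"
proof -
  have S_eq: "S = {j\<in>{1..length g}. at g j \<le> k}" unfolding S_def positions_not_above[symmetric] g(2) ..
  have "packed (filter (\<lambda>x. x \<le> k) g)"
    using set_filter_packed[OF g(1,3)] unfolding packed_def by metis
  moreover have "length (filter (\<lambda>x. x \<le> k) g) = card S"
    unfolding S_eq by (rule length_filter_eq_card)
  moreover have "at (filter (\<lambda>x. x \<le> k) g) (rk S i) = at g i" if "i \<in> S" for i
    using that unfolding S_eq by (intro at_filter_rk) auto
  moreover have "S \<subseteq> {1..n}" unfolding S_def by blast
  ultimately show ?thesis by (simp add: WLin_restr_iff wlin_pair_def)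
qed

lemma WLin_restr_pack_filter_gt_iff:
  fixes g :: "nat list" and k :: nat
  assumes g: "length g = n"
  defines "U \<equiv> positions_above n g k"
  shows "pack (filter (\<lambda>x. k < x) g) \<in> WLin (restr (n, R1, R2) U)
    \<longleftrightarrow> (\<forall>i\<in>U. \<forall>j\<in>U. (i, j) \<in> R1 \<longrightarrow> wlin_pair (n, R1, R2) g i j)"
proof -
  define f where "f = filter (\<lambda>x. k < x) g"
  have U_eq: "U = {j\<in>{1..length g}. k < at g j}" unfolding U_def positions_above_def g ..
  have len: "length f = card U" unfolding f_def U_eq by (rule length_filter_eq_card)
  have at_f: "at f (rk U i) = at g i" if "i \<in> U" for i
    using that unfolding f_def U_eq by (intro at_filter_rk) auto
  have rk_in: "rk U i \<in> {1..length f}" if "i \<in> U" for i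
    using rk_in_interval[of U i] that len unfolding U_def positions_above_def by simp
  have "at (pack f) (rk U i) \<le> at (pack f) (rk U j) \<longleftrightarrow> at g i \<le> at g j"
    and "at (pack f) (rk U i) = at (pack f) (rk U j) \<longleftrightarrow> at g i = at g j"
    if "i \<in> U" "j \<in> U" for i j
    using pack_le_iff[OF rk_in rk_in] pack_eq_iff[OF rk_in rk_in] at_f that by simp_all
  moreover have "U \<subseteq> {1..n}" unfolding U_def positions_above_def by blast
  ultimately show ?thesis unfolding f_def[symmetric]
    by (simp add: WLin_restr_iff wlin_pair_def packed_pack len)
qed

lemma WLin_iff_cut:
  fixes g :: "nat list" and k :: nat
  assumes P: "(n, R1, R2) \<in> WPP" and g: "packed g" "length g = n" "k \<le> maxl g"
  defines "U \<equiv> positions_above n g k"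
  shows "g \<in> WLin (n, R1, R2) \<longleftrightarrow> upclosed1 (n, R1, R2) U
    \<and> filter (\<lambda>x. x \<le> k) g \<in> WLin (restr (n, R1, R2) ({1..n} - U))
    \<and> pack (filter (\<lambda>x. k < x) g) \<in> WLin (restr (n, R1, R2) U)"
proof -
  have "U \<subseteq> {1..n}" unfolding U_def positions_above_def by blast
  then show ?thesis
    unfolding U_def WLin_restr_filter_le_iff[OF g] WLin_restr_pack_filter_gt_iff[OF g(2)]
      upclosed1_def case_prod_conv WLin_iff
    using g wlin_pairs_split[OF WPP_relations_subset(1)[OF P]] by simp
qed

text \<open>The inverse of cutting a word between its letters \<open>\<le> maxl u\<close> and \<open>> maxl u\<close>.\<close>
definition glue_word :: "nat \<Rightarrow> nat list \<Rightarrow> nat list \<Rightarrow> nat set \<Rightarrow> nat list" where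
  "glue_word n u v U =
     map (\<lambda>i. if i \<in> U then at v (rk U i) + maxl u else at u (rk ({1..n} - U) i)) [1..<n+1]"

lemma length_glue_word [simp]: "length (glue_word n u v U) = n"
  unfolding glue_word_def by simp

lemma at_glue_word: "i \<in> {1..n} \<Longrightarrow>
    at (glue_word n u v U) i = (if i \<in> U then at v (rk U i) + maxl u else at u (rk ({1..n} - U) i))"
  unfolding glue_word_def by (rule at_map_upt)

lemma glue_word_cut:
  fixes g :: "nat list" and k :: nat
  assumes g: "packed g" "length g = n" "k \<le> maxl g"
  shows "maxl (filter (\<lambda>x. x \<le> k) g) = k"
    and "glue_word n (filter (\<lambda>x. x \<le> k) g) (pack (filter (\<lambda>x. k < x) g)) (positions_above n g k) = g"
proof -
  obtain K where K: "set (filter (\<lambda>x. x \<le> k) g) = {1..k}" "set (filter (\<lambda>x. k < x) g) = {k+1..k+K}"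
    using set_filter_packed[OF g(1,3)] by metis
  show max: "maxl (filter (\<lambda>x. x \<le> k) g) = k" using K(1) by (rule maxl_interval)
  define U S where "U = positions_above n g k" and "S = {1..n} - positions_above n g k"
  have U_eq: "U = {j\<in>{1..length g}. k < at g j}" unfolding U_def positions_above_def g(2) ..
  have S_eq: "S = {j\<in>{1..length g}. at g j \<le> k}" unfolding S_def positions_not_above[symmetric] g(2) ..
  have "at (pack (filter (\<lambda>x. k < x) g)) (rk U i) + k = at g i" if "i \<in> U" for i
  proof -
    have "rk U i \<in> {1..length (filter (\<lambda>x. k < x) g)}"
      using rk_in_interval[of U i] that unfolding U_eq length_filter_eq_card by simp
    then show ?thesis using that at_filter_rk[of i g "\<lambda>x. k < x"]
      unfolding pack_shift[OF K(2)] U_eq by (simp add: at_map)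
  qed
  moreover have "at (filter (\<lambda>x. x \<le> k) g) (rk S i) = at g i" if "i \<in> S" for i
    using that unfolding S_eq by (intro at_filter_rk) auto
  ultimately show "glue_word n (filter (\<lambda>x. x \<le> k) g) (pack (filter (\<lambda>x. k < x) g)) U = g"
    using g(2) by (intro list_eq_atI) (auto simp: at_glue_word max S_def U_def)
qed

locale glueing =
  fixes n :: nat and u v :: "nat list" and U :: "nat set"
  assumes U: "U \<subseteq> {1..n}"
    and u: "packed u" "length u = card ({1..n} - U)"
    and v: "packed v" "length v = card U"
begin

abbreviation "g \<equiv> glue_word n u v U"

lemma at_glue_small: "i \<in> {1..n} - U \<Longrightarrow> at g i = at u (rk ({1..n} - U) i) \<and> at g i \<in> {1..maxl u}"
  using at_in_set[of "rk ({1..n} - U) i" u] rk_in_interval[of "{1..n} - U" i] packed_maxl[OF u(1)] u(2)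
  by (simp add: at_glue_word)

lemma at_glue_large: "i \<in> U \<Longrightarrow> at g i = at v (rk U i) + maxl u \<and> at g i \<in> {maxl u + 1..maxl u + maxl v}"
  using at_in_set[of "rk U i" v] rk_in_interval[of U i] packed_maxl[OF v(1)] v(2) U finite_subset[OF U]
  by (auto simp: at_glue_word)

lemma positions_above_glue: "positions_above n g (maxl u) = U"
  unfolding positions_above_def using at_glue_small at_glue_large U by fastforce

lemma filter_small_glue: "filter (\<lambda>x. x \<le> maxl u) g = u"
proof -
  have S_eq: "{j\<in>{1..length g}. at g j \<le> maxl u} = {1..n} - U"
    using positions_not_above[of n g "maxl u"] by (simp add: positions_above_glue)
  show ?thesis
  proof (rule list_eq_rkI[of "{1..n} - U"])
    show "length (filter (\<lambda>x. x \<le> maxl u) g) = card ({1..n} - U)"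
      unfolding length_filter_eq_card S_eq ..
    fix i assume i: "i \<in> {1..n} - U"
    then have "i \<in> {1..length g}" "at g i \<le> maxl u" using at_glue_small[OF i] by auto
    then have "at (filter (\<lambda>x. x \<le> maxl u) g) (rk {j\<in>{1..length g}. at g j \<le> maxl u} i) = at g i"
      by (rule at_filter_rk)
    then have "at (filter (\<lambda>x. x \<le> maxl u) g) (rk ({1..n} - U) i) = at g i" unfolding S_eq .
    then show "at (filter (\<lambda>x. x \<le> maxl u) g) (rk ({1..n} - U) i) = at u (rk ({1..n} - U) i)"
      using at_glue_small[OF i] by simp
  qed (simp_all add: u(2))
qed

lemma filter_large_glue: "filter (\<lambda>x. maxl u < x) g = map (\<lambda>x. x + maxl u) v"
proof -
  have U_eq: "{j\<in>{1..length g}. maxl u < at g j} = U"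
    using positions_above_glue unfolding positions_above_def by simp
  show ?thesis
  proof (rule list_eq_rkI[of U])
    show "length (filter (\<lambda>x. maxl u < x) g) = card U" unfolding length_filter_eq_card U_eq ..
    fix i assume i: "i \<in> U"
    have "i \<in> {1..length g}" "maxl u < at g i" using i U at_glue_large[OF i] by auto
    then have "at (filter (\<lambda>x. maxl u < x) g) (rk {j\<in>{1..length g}. maxl u < at g j} i) = at g i"
      by (rule at_filter_rk)
    then have "at (filter (\<lambda>x. maxl u < x) g) (rk U i) = at g i" unfolding U_eq .
    moreover have "rk U i \<in> {1..length v}" using rk_in_interval[OF finite_subset[OF U] i] v(2) by simp
    ultimately show "at (filter (\<lambda>x. maxl u < x) g) (rk U i) = at (map (\<lambda>x. x + maxl u) v) (rk U i)"
      using at_glue_large[OF i] by (simp add: at_map)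
  qed (simp_all add: v(2) finite_subset[OF U])
qed

lemma pack_filter_large_glue: "pack (filter (\<lambda>x. maxl u < x) g) = v"
proof -
  have "set (map (\<lambda>x. x + maxl u) v) = {maxl u + 1..maxl u + maxl v}"
    using packed_maxl[OF v(1)] by (auto simp: image_iff intro!: bexI[of _ "_ - maxl u"])
  then have "pack (map (\<lambda>x. x + maxl u) v) = map (\<lambda>x. x - maxl u) (map (\<lambda>x. x + maxl u) v)"
    by (rule pack_shift)
  then show ?thesis unfolding filter_large_glue by (simp add: comp_def)
qed

lemma packed_glue: "packed g" and maxl_glue: "maxl u \<le> maxl g"
proof -
  have "set g = set (filter (\<lambda>x. x \<le> maxl u) g) \<union> set (filter (\<lambda>x. maxl u < x) g)" by auto
  also have "\<dots> = {1..maxl u + maxl v}"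
    unfolding filter_small_glue filter_large_glue using packed_maxl[OF u(1)] packed_maxl[OF v(1)]
    by (auto simp: image_iff intro!: bexI[of _ "_ - maxl u"])
  finally have set_g: "set g = {1..maxl u + maxl v}" .
  then show "packed g" unfolding packed_def by blast
  show "maxl u \<le> maxl g" using maxl_interval[OF set_g] by simp
qed

end

text \<open>The coefficients of \<open>u \<otimes> v\<close> in \<open>\<Delta> (\<phi>' P)\<close> and in \<open>(\<phi>' \<otimes> \<phi>') (\<Delta> P)\<close>
  count these two sets, which \<open>positions_above\<close> and \<open>glue_word\<close> put in bijection.\<close>
definition word_cuts :: "wppdata \<Rightarrow> nat list \<Rightarrow> nat list \<Rightarrow> (nat list \<times> nat) set" where
  "word_cuts P u v = {(g, k). g \<in> WLin P \<and> k \<in> {0..maxl g}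
     \<and> u = filter (\<lambda>x. x \<le> k) g \<and> v = pack (filter (\<lambda>x. k < x) g)}"

definition ideal_cuts :: "wppdata \<Rightarrow> nat list \<Rightarrow> nat list \<Rightarrow> nat set set" where
  "ideal_cuts P u v = {U. upclosed1 P U \<and> u \<in> WLin (restr P ({1..fst P} - U)) \<and> v \<in> WLin (restr P U)}"

lemma glueing_if_ideal_cut:
  assumes "U \<in> ideal_cuts (n, R1, R2) u v"
  shows "glueing n u v U"
proof
  show U: "U \<subseteq> {1..n}" using assms unfolding ideal_cuts_def upclosed1_def by simp
  have len: "fst (restr P S) = card S" for P S by (cases P) (simp add: restr_def)
  have "u \<in> WLin (restr (n, R1, R2) ({1..n} - U))" "v \<in> WLin (restr (n, R1, R2) U)"
    using assms unfolding ideal_cuts_def by simp_all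
  from WLinD[OF this(1)] WLinD[OF this(2)]
  show "packed u" "length u = card ({1..n} - U)" "packed v" "length v = card U"
    unfolding len by simp_all
qed

lemma word_cut_in_ideal_cuts:
  assumes P: "(n, R1, R2) \<in> WPP" and gk: "(g, k) \<in> word_cuts (n, R1, R2) u v"
  shows "positions_above n g k \<in> ideal_cuts (n, R1, R2) u v"
    and "glue_word n u v (positions_above n g k) = g" "maxl u = k"
proof -
  have g: "g \<in> WLin (n, R1, R2)" "k \<le> maxl g" and uv: "u = filter (\<lambda>x. x \<le> k) g" "v = pack (filter (\<lambda>x. k < x) g)"
    using gk unfolding word_cuts_def by auto
  have g': "packed g" "length g = n" using WLinD[OF g(1)] by simp_all
  show "positions_above n g k \<in> ideal_cuts (n, R1, R2) u v"
    using g(1) WLin_iff_cut[OF P g' g(2)] unfolding ideal_cuts_def uv by simp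
  show "glue_word n u v (positions_above n g k) = g" "maxl u = k"
    unfolding uv using glue_word_cut[OF g' g(2)] by simp_all
qed

lemma ideal_cut_in_word_cuts:
  assumes P: "(n, R1, R2) \<in> WPP" and cut: "U \<in> ideal_cuts (n, R1, R2) u v"
  shows "(glue_word n u v U, maxl u) \<in> word_cuts (n, R1, R2) u v"
    and "positions_above n (glue_word n u v U) (maxl u) = U"
proof -
  interpret glueing n u v U by (rule glueing_if_ideal_cut[OF cut])
  have "upclosed1 (n, R1, R2) U \<and> u \<in> WLin (restr (n, R1, R2) ({1..n} - U))
      \<and> v \<in> WLin (restr (n, R1, R2) U)"
    using cut unfolding ideal_cuts_def by simp
  then have "glue_word n u v U \<in> WLin (n, R1, R2)"
    using WLin_iff_cut[OF P packed_glue length_glue_word maxl_glue]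
    unfolding positions_above_glue filter_small_glue pack_filter_large_glue by blast
  then show "(glue_word n u v U, maxl u) \<in> word_cuts (n, R1, R2) u v"
    unfolding word_cuts_def using maxl_glue filter_small_glue pack_filter_large_glue by simp
  show "positions_above n (glue_word n u v U) (maxl u) = U" by (rule positions_above_glue)
qed

lemma card_word_cuts_eq:
  assumes P: "(n, R1, R2) \<in> WPP"
  shows "card (word_cuts (n, R1, R2) u v) = card (ideal_cuts (n, R1, R2) u v)"
proof (rule bij_betw_same_card[OF bij_betw_byWitness[where f="\<lambda>(g, k). positions_above n g k"
      and f'="\<lambda>U. (glue_word n u v U, maxl u)"]])
  show "\<forall>a \<in> word_cuts (n, R1, R2) u v. (\<lambda>U. (glue_word n u v U, maxl u)) ((\<lambda>(g, k). positions_above n g k) a) = a"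
    using word_cut_in_ideal_cuts[OF P] by auto
  show "(\<lambda>(g, k). positions_above n g k) ` word_cuts (n, R1, R2) u v \<subseteq> ideal_cuts (n, R1, R2) u v"
    using word_cut_in_ideal_cuts(1)[OF P] by auto
qed (use ideal_cut_in_word_cuts[OF P] in auto)

lemma finite_upclosed1: "finite {U. upclosed1 P U}"
proof -
  obtain n R1 R2 where "P = (n, R1, R2)" by (cases P)
  then have "{U. upclosed1 P U} \<subseteq> Pow {1..n}" unfolding upclosed1_def by auto
  then show ?thesis by (rule finite_subset) simp
qed

lemma coprodH_mat_eq: "coprodH_mat P =
    (\<lambda>y. \<Sum>U\<in>{U. upclosed1 P U}. ind (y = (restr P ({1..fst P} - U), restr P U)))"
  unfolding coprodH_mat_def by (intro ext) (simp add: split_beta prod_eq_iff)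

lemma coprodH_coefficient:
  "lin_ext (tensor_mat (\<lambda>P g. ind (g \<in> WLin P)) (\<lambda>P g. ind (g \<in> WLin P))) (coprodH_mat P) (u, v)
    = (of_nat (card (ideal_cuts P u v)) :: 'k::field)"
proof -
  have "ind (u \<in> WLin P1) * ind (v \<in> WLin P2) = (ind (u \<in> WLin P1 \<and> v \<in> WLin P2) :: 'k)" for P1 P2
    by (simp add: ind_def)
  then show ?thesis
    unfolding coprodH_mat_eq lin_ext_sum_ind(2)[OF finite_upclosed1] tensor_mat_def ideal_cuts_def
    by (simp add: sum_ind[OF finite_upclosed1])
qed

lemma coprodW_coefficient:
  "lin_ext coprodW_mat (\<lambda>g. ind (g \<in> WLin P)) (u, v) = (of_nat (card (word_cuts P u v)) :: 'k::field)"
proof -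
  define K where "K g = {k\<in>{0..maxl g}. u = filter (\<lambda>x. x \<le> k) g \<and> v = pack (filter (\<lambda>x. k < x) g)}"
    for g
  have "lin_ext coprodW_mat (\<lambda>g. ind (g \<in> WLin P)) (u, v) = (\<Sum>g\<in>WLin P. (of_nat (card (K g)) :: 'k))"
    unfolding lin_ext_ind[OF finite_WLin] coprodW_mat_def K_def by (simp add: sum_ind)
  also have "\<dots> = of_nat (card (SIGMA g:WLin P. K g))"
    by (simp add: card_SigmaI finite_WLin K_def)
  also have "(SIGMA g:WLin P. K g) = word_cuts P u v" unfolding K_def word_cuts_def by auto
  finally show ?thesis .
qed

lemma phi'_comult:
  assumes a: "a \<in> freevec WPP"
  shows "lin_ext (tensor_mat (\<lambda>P g. ind (g \<in> WLin P)) (\<lambda>P g. ind (g \<in> WLin P)))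
    (coprodH a) = coprodW (phi' (a :: wppdata \<Rightarrow> 'k::field))"
proof
  fix z :: "nat list \<times> nat list"
  obtain u v where z: "z = (u, v)" by (cases z)
  have fin: "finite (supp a)" using a unfolding freevec_def by simp
  have row: "finite (supp (coprodH_mat P :: _ \<Rightarrow> 'k))" for P
    unfolding coprodH_mat_eq
    by (rule finite_subset[OF lin_ext_sum_ind(1)[OF finite_upclosed1]]) (simp add: finite_upclosed1)
  have "card (ideal_cuts P u v) = card (word_cuts P u v)" if "P \<in> supp a" for P
    using that a card_word_cuts_eq unfolding freevec_def by (cases P) force
  then show "lin_ext (tensor_mat (\<lambda>P g. ind (g \<in> WLin P)) (\<lambda>P g. ind (g \<in> WLin P))) (coprodH a) z
      = coprodW (phi' a) z"
    unfolding coprodH_def coprodW_def phi'_def z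
    by (simp add: lin_ext_lin_ext[OF fin] row supp_ind finite_WLin coprodH_coefficient
        coprodW_coefficient)
qed

theorem mainTheorem7:
  shows "bij_betw (phi' :: (wppdata \<Rightarrow> 'k::field) \<Rightarrow> (nat list \<Rightarrow> 'k))
            (freevec WPP) (freevec PW)
       \<and> (\<forall>a\<in>freevec WPP. \<forall>b\<in>freevec WPP.
            phi' (prodH a b) = prodW (phi' a) (phi' (b :: wppdata \<Rightarrow> 'k)))
       \<and> phi' (unitH :: wppdata \<Rightarrow> 'k) = unitW
       \<and> (\<forall>a\<in>freevec WPP.
            lin_ext (tensor_mat (\<lambda>P g. ind (g \<in> WLin P)) (\<lambda>P g. ind (g \<in> WLin P)))
              (coprodH a) = coprodW (phi' (a :: wppdata \<Rightarrow> 'k)))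
       \<and> (\<forall>a\<in>freevec WPP. counitW (phi' a) = counitH (a :: wppdata \<Rightarrow> 'k))
       \<and> (\<forall>a\<in>freevec WPP. phi' a = psi (phi (a :: wppdata \<Rightarrow> 'k)))"
  by (intro conjI ballI bij_betw_phi' phi'_mult phi'_unit phi'_comult phi'_counit phi'_eq_psi_phi)

end
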